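(* Let $k\le n$ be positive integers and use the neglex order. (i) Let $(\alpha,\mathbf i)\in A_{n,k}$ and $w\in\mathfrak S_n$ with $\mathrm{Des}(\alpha)\subseteq\mathrm{Des}(w)\subseteq\mathrm{Des}(\alpha\cup\mathbf i)$. Then the leading term of $\overline\pi_w(\mathbf x_{\alpha,\mathbf i})$ is $w(\mathbf x_{\alpha,\mathbf i})=gs_{w,\mathbf i'}\in\mathcal{GS}_{n,k}$, where $\mathbf i'=(i'_1,\dots,i'_n)$ is given by $$i'_j=i_j-|\{r\in\mathrm{Des}(w)\cap[n-k]: r\ge j\}|\quad(1\le j\le n).\qquad( * )$$ (ii) Let $gs_{w,\mathbf i'}\in\mathcal{GS}_{n,k}$. Then $gs_{w,\mathbf i'}$ is the leading term of $\overline\pi_w(\mathbf x_{\alpha,\mathbf i})$ with $(\alpha,\mathbf i)\in A_{n,k}$ and $\mathrm{Des}(\alpha)\subseteq\mathrm{Des}(w)\subseteq\mathrm{Des}(\alpha\cup\mathbf i)$ if and only if $\alpha$ is the composition with $\mathrm{Des}(\alpha)=\mathrm{Des}(w)\setminus[n-k]$ and $\mathbf i$ is related to $\mathbf i'$ by $( * )$; moreover for these $\alpha,\mathbf i$ one indeed has $(\alpha,\mathbf i)\in A_{n,k}$ and the stated property.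
   Context: $H_n(0)$ acts on $\mathbb F[x_1,\dots,x_n]$ by $\pi_i(f)=\frac{x_if-x_{i+1}s_i(f)}{x_i-x_{i+1}}$; $\overline\pi_i=\pi_i-1$; $\overline\pi_w$ is the product along a reduced word of $w$. Permutations act on polynomials by $x_i\mapsto x_{w(i)}$. Neglex: lexicographic order with $x_n>\cdots>x_1$. For $\alpha=(\alpha_1,\dots,\alpha_\ell)\models n$, $\mathrm{Des}(\alpha)=\{\alpha_1,\dots,\alpha_1+\cdots+\alpha_{\ell-1}\}$ and $\ell(\alpha)=\ell$; for an integer sequence $\mathbf i$, $\mathrm{Des}(\mathbf i)=\{j:i_j>i_{j+1}\}$; $\alpha\cup\mathbf i$ is the composition with $\mathrm{Des}(\alpha\cup\mathbf i)=\mathrm{Des}(\alpha)\cup\mathrm{Des}(\mathbf i)$; $\mathrm{Des}(w)=\{j:w(j)>w(j+1)\}$, $\mathrm{des}(w)=|\mathrm{Des}(w)|$. $\mathbf x_{\alpha,\mathbf i}=\big(\prod_{j\in\mathrm{Des}(\alpha)}x_1\cdots x_j\big)x_1^{i_1}\cdots x_n^{i_n}$; $gs_{w,\mathbf i}=w(\mathbf x_{\beta,\mathbf i})$ with $\mathrm{Des}(\beta)=\mathrm{Des}(w)$; $\mathcal{GS}_{n,k}=\{gs_{w,\mathbf i}: k-\mathrm{des}(w)>i_1\ge\cdots\ge i_{n-k}\ge0=i_{n-k+1}=\cdots=i_n\}$. $A_{n,k}$ is the set of pairs $(\alpha,\mathbf i)$ with $\alpha\models n$ whose first part satisfies $\alpha_1>n-k$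 and $\mathbf i=(i_1,\dots,i_n)$ integers with $k-\ell(\alpha)\ge i_1\ge\cdots\ge i_{n-k}\ge0=i_{n-k+1}=\cdots=i_n$. *)

theory Defs
  imports Main "HOL-Library.Poly_Mapping" "HOL-Combinatorics.Permutations"
begin

text \<open>Polynomials in the variables x_1, x_2, ... over a field: finitely supported
  maps from exponent vectors (monomials) to coefficients, with the convolution product.\<close>
type_synonym 'a mpoly = "(nat \<Rightarrow>\<^sub>0 nat) \<Rightarrow>\<^sub>0 'a"

definition X :: "nat \<Rightarrow> 'a::field mpoly" where
  "X i = Poly_Mapping.single (Poly_Mapping.single i 1) 1"

definition const :: "'a::field \<Rightarrow> 'a mpoly" where
  "const c = Poly_Mapping.single 0 c"

definition act :: "(nat \<Rightarrow> nat) \<Rightarrow> 'a::field mpoly \<Rightarrow> 'a mpoly" where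
  "act w p = (\<Sum>m\<in>Poly_Mapping.keys p.
      const (Poly_Mapping.lookup p m) * (\<Prod>j\<in>Poly_Mapping.keys m. X (w j) ^ Poly_Mapping.lookup m j))"

definition s :: "nat \<Rightarrow> nat \<Rightarrow> nat" where
  "s i = Transposition.transpose i (Suc i)"

definition pi_op :: "nat \<Rightarrow> 'a::field mpoly \<Rightarrow> 'a mpoly" where
  "pi_op i f = (THE g. (X i - X (Suc i)) * g = X i * f - X (Suc i) * act (s i) f)"

definition pibar_op :: "nat \<Rightarrow> 'a::field mpoly \<Rightarrow> 'a mpoly" where
  "pibar_op i f = pi_op i f - f"

definition inv_count :: "nat \<Rightarrow> (nat \<Rightarrow> nat) \<Rightarrow> nat" where
  "inv_count n w = card {(i, j). 1 \<le> i \<and> i < j \<and> j \<le> n \<and> w i > w j}"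

definition word_perm :: "nat list \<Rightarrow> nat \<Rightarrow> nat" where
  "word_perm ws = foldr (\<lambda>i acc. s i \<circ> acc) ws id"

definition reduced_word :: "nat \<Rightarrow> (nat \<Rightarrow> nat) \<Rightarrow> nat list \<Rightarrow> bool" where
  "reduced_word n w ws \<longleftrightarrow> (\<forall>i\<in>set ws. 1 \<le> i \<and> i < n) \<and> word_perm ws = w
      \<and> length ws = inv_count n w"

definition pibar_w :: "nat \<Rightarrow> (nat \<Rightarrow> nat) \<Rightarrow> 'a::field mpoly \<Rightarrow> 'a mpoly" where
  "pibar_w n w = foldr (\<lambda>i g. pibar_op i \<circ> g) (SOME ws. reduced_word n w ws) id"

text \<open>Neglex order on monomials: lexicographic with x_n > ... > x_1, i.e. compare
  exponents of the variable of largest index first.\<close>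
definition neglex_less :: "(nat \<Rightarrow>\<^sub>0 nat) \<Rightarrow> (nat \<Rightarrow>\<^sub>0 nat) \<Rightarrow> bool" where
  "neglex_less a b \<longleftrightarrow> (\<exists>j. Poly_Mapping.lookup a j < Poly_Mapping.lookup b j \<and>
      (\<forall>l>j. Poly_Mapping.lookup a l = Poly_Mapping.lookup b l))"

definition lead_monom :: "'a::field mpoly \<Rightarrow> (nat \<Rightarrow>\<^sub>0 nat)" where
  "lead_monom p = (THE m. m \<in> Poly_Mapping.keys p \<and>
      (\<forall>m'\<in>Poly_Mapping.keys p. m' \<noteq> m \<longrightarrow> neglex_less m' m))"

definition lead_term :: "'a::field mpoly \<Rightarrow> 'a mpoly" where
  "lead_term p = Poly_Mapping.single (lead_monom p) (Poly_Mapping.lookup p (lead_monom p))"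

definition is_comp :: "nat \<Rightarrow> nat list \<Rightarrow> bool" where
  "is_comp n \<alpha> \<longleftrightarrow> (\<forall>a\<in>set \<alpha>. 0 < a) \<and> sum_list \<alpha> = n"

definition Des_comp :: "nat list \<Rightarrow> nat set" where
  "Des_comp \<alpha> = {sum_list (take j \<alpha>) | j. 1 \<le> j \<and> j < length \<alpha>}"

text \<open>Integer sequences (i_1,...,i_n) are functions nat => int, read on {1..n}.\<close>
definition Des_seq :: "nat \<Rightarrow> (nat \<Rightarrow> int) \<Rightarrow> nat set" where
  "Des_seq n i = {j. 1 \<le> j \<and> j < n \<and> i j > i (Suc j)}"

definition Des_perm :: "nat \<Rightarrow> (nat \<Rightarrow> nat) \<Rightarrow> nat set" where
  "Des_perm n w = {j. 1 \<le> j \<and> j < n \<and> w j > w (Suc j)}"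

definition des_perm :: "nat \<Rightarrow> (nat \<Rightarrow> nat) \<Rightarrow> nat" where
  "des_perm n w = card (Des_perm n w)"

definition xD :: "nat \<Rightarrow> nat set \<Rightarrow> (nat \<Rightarrow> int) \<Rightarrow> 'a::field mpoly" where
  "xD n D i = (\<Prod>j\<in>D. \<Prod>m\<in>{1..j}. X m) * (\<Prod>m\<in>{1..n}. X m ^ nat (i m))"

definition x_alpha :: "nat \<Rightarrow> nat list \<Rightarrow> (nat \<Rightarrow> int) \<Rightarrow> 'a::field mpoly" where
  "x_alpha n \<alpha> i = xD n (Des_comp \<alpha>) i"

text \<open>gs_{w,i} = w(x_{beta,i}) with Des(beta) = Des(w).\<close>
definition gs :: "nat \<Rightarrow> (nat \<Rightarrow> nat) \<Rightarrow> (nat \<Rightarrow> int) \<Rightarrow> 'a::field mpoly" where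
  "gs n w i = act w (xD n (Des_perm n w) i)"

definition GS_index :: "nat \<Rightarrow> nat \<Rightarrow> (nat \<Rightarrow> nat) \<Rightarrow> (nat \<Rightarrow> int) \<Rightarrow> bool" where
  "GS_index n k w i \<longleftrightarrow> w permutes {1..n} \<and>
     i 1 < int k - int (des_perm n w) \<and>
     (\<forall>j. 1 \<le> j \<and> j < n - k \<longrightarrow> i (Suc j) \<le> i j) \<and>
     (\<forall>j. 1 \<le> j \<and> j \<le> n \<longrightarrow> 0 \<le> i j) \<and>
     (\<forall>j. n - k < j \<and> j \<le> n \<longrightarrow> i j = 0)"

definition GS :: "nat \<Rightarrow> nat \<Rightarrow> 'a::field mpoly set" where
  "GS n k = {gs n w i | w i. GS_index n k w i}"

definition in_A :: "nat \<Rightarrow> nat \<Rightarrow> nat list \<Rightarrow> (nat \<Rightarrow> int) \<Rightarrow> bool" where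
  "in_A n k \<alpha> i \<longleftrightarrow> is_comp n \<alpha> \<and> hd \<alpha> > n - k \<and>
     i 1 \<le> int k - int (length \<alpha>) \<and>
     (\<forall>j. 1 \<le> j \<and> j < n - k \<longrightarrow> i (Suc j) \<le> i j) \<and>
     (\<forall>j. 1 \<le> j \<and> j \<le> n \<longrightarrow> 0 \<le> i j) \<and>
     (\<forall>j. n - k < j \<and> j \<le> n \<longrightarrow> i j = 0)"

definition shift_count :: "nat \<Rightarrow> nat \<Rightarrow> (nat \<Rightarrow> nat) \<Rightarrow> nat \<Rightarrow> int" where
  "shift_count n k w j = int (card {r \<in> Des_perm n w \<inter> {1..n-k}. j \<le> r})"

end

theory Submission
  imports Defs
begin

text \<open>The exponent \<open>a\<close> of \<open>x\<^sub>\<alpha>\<^sub>,\<^sub>i\<close> is weakly decreasing, and the hypothesis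
  \<open>Des(w) \<subseteq> Des(\<alpha> \<union> i)\<close> makes it strictly decreasing at every descent of \<open>w\<close>.
  Along a reduced word of \<open>w\<close>, \<open>\<pi>\<^sub>i - 1\<close> maps \<open>x\<^sup>e\<close> to monomials on the segment from \<open>e\<close>
  to \<open>s\<^sub>i e\<close>; so every exponent of \<open>pibar_w n w x\<^sup>a\<close> lies in the convex hull of the points
  \<open>a \<circ> u\<close>, \<open>u\<close> a subword product, and all these points are dominated tail by tail by
  \<open>w(a)\<close>. Since every letter of the reduced word swaps a strict descent of the current
  leading exponent, only one monomial reaches \<open>w(a)\<close>, with coefficient \<open>1\<close>, and comparing
  tail sums shows that all other exponents are smaller in neglex order. The remaining
  statements are bookkeeping: moving the descents of \<open>w\<close> inside \<open>[n - k]\<close> from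
  \<open>Des(\<alpha>)\<close> into the exponent sequence turns \<open>x\<^sub>\<alpha>\<^sub>,\<^sub>i\<close> into the exponent of
  \<open>gs\<^sub>w\<^sub>,\<^sub>i\<^sub>'\<close>, which is exactly the relation \<open>(*)\<close>.\<close>

section \<open>Monomials and the permutation action\<close>

abbreviation lookup :: "('b \<Rightarrow>\<^sub>0 'c::zero) \<Rightarrow> 'b \<Rightarrow> 'c" where
  "lookup \<equiv> Poly_Mapping.lookup"

abbreviation keys :: "('b \<Rightarrow>\<^sub>0 'c::zero) \<Rightarrow> 'b set" where
  "keys \<equiv> Poly_Mapping.keys"

abbreviation monomial :: "(nat \<Rightarrow>\<^sub>0 nat) \<Rightarrow> 'a::field mpoly" where
  "monomial e \<equiv> Poly_Mapping.single e 1"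

lemma X_power: "(X i :: 'a::field mpoly) ^ k = monomial (Poly_Mapping.single i k)"
proof (induction k)
  case (Suc k)
  have "Poly_Mapping.single i 1 + Poly_Mapping.single i k = Poly_Mapping.single i (Suc k)"
    by (simp add: single_add[symmetric])
  with Suc show ?case by (simp add: X_def mult_single)
qed simp

lemma prod_monomial: "(\<Prod>x\<in>A. monomial (f x) :: 'a::field mpoly) = monomial (\<Sum>x\<in>A. f x)"
  by (induction A rule: infinite_finite_induct) (simp_all add: mult_single)

lemma const_mult_monomial: "const c * monomial e = Poly_Mapping.single e c"
  by (simp add: const_def mult_single)

lemma poly_mapping_eq_sum_single:
  fixes p :: "'b \<Rightarrow>\<^sub>0 'c::comm_monoid_add"
  shows "p = (\<Sum>e\<in>keys p. Poly_Mapping.single e (lookup p e))"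
  by (rule poly_mapping_eqI) (simp add: lookup_sum lookup_single when_def in_keys_iff)

lemma lookup_const_mult: "lookup (const c * (p :: 'a::field mpoly)) e = c * lookup p e"
proof -
  have "const c * p = (\<Sum>e\<in>keys p. Poly_Mapping.single e (c * lookup p e))"
    by (subst poly_mapping_eq_sum_single[of p]) (simp add: sum_distrib_left const_def mult_single)
  then show ?thesis
    by (simp add: lookup_sum lookup_single when_def in_keys_iff)
qed

lemma keys_const_mult: "keys (const c * (p :: 'a::field mpoly)) \<subseteq> keys p"
  by (auto simp: in_keys_iff lookup_const_mult)

definition permute_exponent :: "(nat \<Rightarrow> nat) \<Rightarrow> (nat \<Rightarrow>\<^sub>0 nat) \<Rightarrow> (nat \<Rightarrow>\<^sub>0 nat)" where
  "permute_exponent w m = (\<Sum>j\<in>keys m. Poly_Mapping.single (w j) (lookup m j))"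

lemma act_eq_sum:
  "act w (p :: 'a::field mpoly) = (\<Sum>m\<in>keys p. Poly_Mapping.single (permute_exponent w m) (lookup p m))"
  by (simp add: act_def X_power prod_monomial permute_exponent_def const_mult_monomial)

lemma act_monomial: "act w (monomial e :: 'a::field mpoly) = monomial (permute_exponent w e)"
  by (simp add: act_eq_sum)

lemma lookup_permute_exponent:
  assumes "bij w"
  shows "lookup (permute_exponent w m) k = lookup m (inv w k)"
proof -
  have "lookup (permute_exponent w m) k = (\<Sum>j\<in>keys m. if j = inv w k then lookup m j else 0)"
    unfolding permute_exponent_def lookup_sum lookup_single
    by (intro sum.cong refl) (use assms in \<open>auto simp: when_def bij_inv_eq_iff\<close>)
  then show ?thesis
    by (simp add: in_keys_iff)
qed

lemma permute_exponent_id: "permute_exponent id m = m"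
  by (rule poly_mapping_eqI) (simp add: lookup_permute_exponent)

lemma permute_exponent_inj:
  assumes "bij w" and "permute_exponent w e = permute_exponent w e'"
  shows "e = e'"
proof (rule poly_mapping_eqI)
  fix j
  have "lookup (permute_exponent w e) (w j) = lookup (permute_exponent w e') (w j)"
    using assms(2) by simp
  then show "lookup e j = lookup e' j"
    using assms(1) by (simp add: lookup_permute_exponent bij_is_inj)
qed

section \<open>The operators \<open>\<pi>\<^sub>i\<close> on monomials\<close>

lemma s_apply: "s i i = Suc i" "s i (Suc i) = i" "m \<noteq> i \<Longrightarrow> m \<noteq> Suc i \<Longrightarrow> s i m = m"
  by (auto simp: s_def transpose_def)

lemma s_s [simp]: "s i (s i m) = m"
  by (simp add: s_def)

lemma bij_s: "bij (s i)"
  by (simp add: s_def)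

lemma inv_s: "inv (s i) = s i"
  by (simp add: s_def inv_transpose_eq)

lemma s_permutes: "1 \<le> i \<Longrightarrow> i < n \<Longrightarrow> s i permutes {1..n}"
  unfolding s_def by (intro permutes_swap_id) auto

definition clear_pair :: "nat \<Rightarrow> (nat \<Rightarrow>\<^sub>0 nat) \<Rightarrow> (nat \<Rightarrow>\<^sub>0 nat)" where
  "clear_pair i e = Poly_Mapping.update i 0 (Poly_Mapping.update (Suc i) 0 e)"

definition pair_exponent :: "nat \<Rightarrow> (nat \<Rightarrow>\<^sub>0 nat) \<Rightarrow> nat \<Rightarrow> nat \<Rightarrow> (nat \<Rightarrow>\<^sub>0 nat)" where
  "pair_exponent i r t u = r + Poly_Mapping.single i t + Poly_Mapping.single (Suc i) u"

lemma lookup_pair_exponent: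
  "lookup (pair_exponent i r t u) m = lookup r m + (if m = i then t else 0) + (if m = Suc i then u else 0)"
  by (auto simp: pair_exponent_def lookup_add lookup_single when_def)

lemma lookup_clear_pair:
  "lookup (clear_pair i e) m = (if m = i \<or> m = Suc i then 0 else lookup e m)"
  by (auto simp: clear_pair_def lookup_update)

lemma pair_exponent_clear_pair: "pair_exponent i (clear_pair i e) (lookup e i) (lookup e (Suc i)) = e"
  by (rule poly_mapping_eqI) (auto simp: lookup_pair_exponent lookup_clear_pair)

lemma pair_exponent_inj: "pair_exponent i r t u = pair_exponent i r t' u' \<Longrightarrow> t = t' \<and> u = u'"
  by (drule arg_cong[where f = "\<lambda>e. (lookup e i, lookup e (Suc i))"]) (simp add: lookup_pair_exponent)

lemma permute_exponent_s:
  "permute_exponent (s i) e = pair_exponent i (clear_pair i e) (lookup e (Suc i)) (lookup e i)"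
  by (rule poly_mapping_eqI)
    (auto simp: lookup_permute_exponent[OF bij_s] inv_s lookup_pair_exponent lookup_clear_pair s_apply)

lemma single_add_pair_exponent:
  "Poly_Mapping.single i 1 + pair_exponent i r t u = pair_exponent i r (Suc t) u"
  "Poly_Mapping.single (Suc i) 1 + pair_exponent i r t u = pair_exponent i r t (Suc u)"
  by (rule poly_mapping_eqI, simp add: lookup_pair_exponent lookup_add lookup_single when_def)+

lemma X_mult_pair_exponent:
  "(X i :: 'a::field mpoly) * monomial (pair_exponent i r t u) = monomial (pair_exponent i r (Suc t) u)"
  "(X (Suc i) :: 'a::field mpoly) * monomial (pair_exponent i r t u) = monomial (pair_exponent i r t (Suc u))"
  by (simp_all only: X_def mult_single single_add_pair_exponent mult_1)

definition pi_pair :: "nat \<Rightarrow> nat \<Rightarrow> nat \<Rightarrow> (nat \<Rightarrow>\<^sub>0 nat) \<Rightarrow> 'a::field mpoly" where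
  "pi_pair i p q r = (if q \<le> p then (\<Sum>t\<in>{q..p}. monomial (pair_exponent i r t (p + q - t)))
      else - (\<Sum>t\<in>{Suc p..<q}. monomial (pair_exponent i r t (p + q - t))))"

lemma pi_pair_eq:
  "(X i - X (Suc i) :: 'a::field mpoly) * pi_pair i p q r
     = X i * monomial (pair_exponent i r p q) - X (Suc i) * monomial (pair_exponent i r q p)"
proof -
  define h where "h t = (monomial (pair_exponent i r t (p + q + 1 - t)) :: 'a mpoly)" for t
  have telescope: "(X i - X (Suc i) :: 'a mpoly) * monomial (pair_exponent i r t (p + q - t)) = h (Suc t) - h t"
    if "t \<le> p + q" for t
    using that by (simp add: left_diff_distrib X_mult_pair_exponent h_def Suc_diff_le)
  show ?thesis
  proof (cases "q \<le> p")
    case True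
    then have "(X i - X (Suc i) :: 'a mpoly) * pi_pair i p q r
        = (\<Sum>t=q..p. (X i - X (Suc i)) * monomial (pair_exponent i r t (p + q - t)))"
      by (simp add: pi_pair_def sum_distrib_left)
    also have "\<dots> = (\<Sum>t=q..p. h (Suc t) - h t)"
      by (rule sum.cong[OF refl], rule telescope) auto
    also have "\<dots> = h (Suc p) - h q"
      using True by (intro sum_Suc_diff) simp
    finally show ?thesis
      by (simp add: h_def X_mult_pair_exponent Suc_diff_le)
  next
    case False
    then have "{Suc p..<q} = {Suc p..q - 1}"
      by auto
    with False have "(X i - X (Suc i) :: 'a mpoly) * pi_pair i p q r
        = - (\<Sum>t=Suc p..q - 1. (X i - X (Suc i)) * monomial (pair_exponent i r t (p + q - t)))"
      by (simp add: pi_pair_def sum_distrib_left)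
    also have "\<dots> = - (\<Sum>t=Suc p..q - 1. h (Suc t) - h t)"
      by (subst sum.cong[OF refl telescope]) auto
    also have "\<dots> = - (h q - h (Suc p))"
      using False by (subst sum_Suc_diff) auto
    finally show ?thesis
      using False by (simp add: h_def X_mult_pair_exponent Suc_diff_le)
  qed
qed

definition pi_monomial :: "nat \<Rightarrow> (nat \<Rightarrow>\<^sub>0 nat) \<Rightarrow> 'a::field mpoly" where
  "pi_monomial i e = pi_pair i (lookup e i) (lookup e (Suc i)) (clear_pair i e)"

definition pibar_monomial :: "nat \<Rightarrow> (nat \<Rightarrow>\<^sub>0 nat) \<Rightarrow> 'a::field mpoly" where
  "pibar_monomial i e = pi_monomial i e - monomial e"

lemma pi_monomial_eq:
  "(X i - X (Suc i) :: 'a::field mpoly) * pi_monomial i e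
     = X i * monomial e - X (Suc i) * monomial (permute_exponent (s i) e)"
  unfolding pi_monomial_def permute_exponent_s
  by (subst (2) pair_exponent_clear_pair[of i e, symmetric]) (rule pi_pair_eq)

lemma X_diff_nonzero: "(X i - X (Suc i) :: 'a::field mpoly) \<noteq> 0"
proof
  assume "(X i - X (Suc i) :: 'a mpoly) = 0"
  then have "lookup (X i :: 'a mpoly) (Poly_Mapping.single i 1) = lookup (X (Suc i) :: 'a mpoly) (Poly_Mapping.single i 1)"
    by simp
  moreover have "Poly_Mapping.single (Suc i) (1::nat) \<noteq> Poly_Mapping.single i 1"
    by (metis lookup_single_eq lookup_single_not_eq n_not_Suc_n one_neq_zero)
  ultimately show False
    by (simp add: X_def lookup_single when_def)
qed

lemma pi_op_eq_sum: "pi_op i f = (\<Sum>e\<in>keys f. const (lookup f e) * pi_monomial i e :: 'a::field mpoly)"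
  unfolding pi_op_def
proof (rule the_equality)
  let ?g = "\<Sum>e\<in>keys f. const (lookup f e) * pi_monomial i e :: 'a mpoly"
  have summand: "(X i - X (Suc i) :: 'a mpoly) * (const c * pi_monomial i e)
      = X i * Poly_Mapping.single e c - X (Suc i) * Poly_Mapping.single (permute_exponent (s i) e) c" for c e
  proof -
    have "(X i - X (Suc i) :: 'a mpoly) * (const c * pi_monomial i e) = const c * ((X i - X (Suc i)) * pi_monomial i e)"
      by (rule mult.left_commute)
    also have "\<dots> = const c * (X i * monomial e) - const c * (X (Suc i) * monomial (permute_exponent (s i) e))"
      by (simp only: pi_monomial_eq right_diff_distrib)
    also have "\<dots> = X i * (const c * monomial e) - X (Suc i) * (const c * monomial (permute_exponent (s i) e))"
      by (simp only: mult.left_commute[of "const c"])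
    finally show ?thesis
      by (simp only: const_mult_monomial)
  qed
  have "(X i - X (Suc i)) * ?g
      = (\<Sum>e\<in>keys f. X i * Poly_Mapping.single e (lookup f e)
          - X (Suc i) * Poly_Mapping.single (permute_exponent (s i) e) (lookup f e))"
    by (simp only: sum_distrib_left summand)
  also have "\<dots> = X i * (\<Sum>e\<in>keys f. Poly_Mapping.single e (lookup f e)) - X (Suc i) * act (s i) f"
    by (simp add: sum_subtractf sum_distrib_left act_eq_sum)
  also have "(\<Sum>e\<in>keys f. Poly_Mapping.single e (lookup f e)) = f"
    by (rule poly_mapping_eq_sum_single[symmetric])
  finally show eq: "(X i - X (Suc i)) * ?g = X i * f - X (Suc i) * act (s i) f" .
  show "g = ?g" if "(X i - X (Suc i)) * g = X i * f - X (Suc i) * act (s i) f" for g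
  proof -
    have "(X i - X (Suc i)) * g = (X i - X (Suc i)) * ?g"
      using that eq by simp
    then show ?thesis
      using X_diff_nonzero[of i, where 'a = 'a] by simp
  qed
qed

lemma pibar_op_eq_sum:
  "pibar_op i f = (\<Sum>e\<in>keys f. const (lookup f e) * pibar_monomial i e :: 'a::field mpoly)"
proof -
  have "f = (\<Sum>e\<in>keys f. const (lookup f e) * monomial e :: 'a mpoly)"
    by (simp add: const_mult_monomial poly_mapping_eq_sum_single[of f, symmetric])
  then show ?thesis
    unfolding pibar_op_def pi_op_eq_sum pibar_monomial_def
    by (simp add: algebra_simps sum_subtractf)
qed

text \<open>\<open>d\<close> is a lattice point of the segment joining the exponent \<open>e\<close> and its image under \<open>s\<^sub>i\<close>.\<close>

definition on_swap_segment :: "nat \<Rightarrow> (nat \<Rightarrow>\<^sub>0 nat) \<Rightarrow> (nat \<Rightarrow>\<^sub>0 nat) \<Rightarrow> bool" where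
  "on_swap_segment i e d \<longleftrightarrow> (\<forall>m. m \<noteq> i \<longrightarrow> m \<noteq> Suc i \<longrightarrow> lookup d m = lookup e m) \<and>
     lookup d i + lookup d (Suc i) = lookup e i + lookup e (Suc i) \<and>
     min (lookup e i) (lookup e (Suc i)) \<le> lookup d (Suc i) \<and>
     lookup d (Suc i) \<le> max (lookup e i) (lookup e (Suc i))"

lemma keys_pi_pair:
  assumes "d \<in> keys (pi_pair i p q r :: 'a::field mpoly)"
  obtains t where "d = pair_exponent i r t (p + q - t)" and "min p q \<le> t" and "t \<le> max p q"
proof (cases "q \<le> p")
  case True
  then have "d \<in> keys (\<Sum>t\<in>{q..p}. monomial (pair_exponent i r t (p + q - t)) :: 'a mpoly)"
    using assms by (simp add: pi_pair_def)
  with True that show ?thesis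
    using keys_sum by fastforce
next
  case False
  then have "d \<in> keys (\<Sum>t\<in>{Suc p..<q}. monomial (pair_exponent i r t (p + q - t)) :: 'a mpoly)"
    using assms by (simp add: pi_pair_def)
  with False that show ?thesis
    using keys_sum by fastforce
qed

lemma keys_pibar_monomial:
  assumes "d \<in> keys (pibar_monomial i e :: 'a::field mpoly)"
  shows "on_swap_segment i e d"
proof -
  have "d \<in> keys (pi_monomial i e :: 'a mpoly) \<or> d = e"
    using assms keys_diff unfolding pibar_monomial_def by fastforce
  then show ?thesis
  proof
    assume "d \<in> keys (pi_monomial i e :: 'a mpoly)"
    then obtain t where "d = pair_exponent i (clear_pair i e) t (lookup e i + lookup e (Suc i) - t)"
      and "min (lookup e i) (lookup e (Suc i)) \<le> t" "t \<le> max (lookup e i) (lookup e (Suc i))"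
      unfolding pi_monomial_def by (rule keys_pi_pair)
    then show ?thesis
      by (auto simp: on_swap_segment_def lookup_pair_exponent lookup_clear_pair)
  qed (simp add: on_swap_segment_def)
qed

lemma lookup_pibar_monomial_swap:
  assumes "lookup e (Suc i) < lookup e i"
  shows "lookup (pibar_monomial i e :: 'a::field mpoly) (permute_exponent (s i) e) = 1"
proof -
  let ?p = "lookup e i" and ?q = "lookup e (Suc i)" and ?r = "clear_pair i e"
  have "lookup (pi_monomial i e :: 'a mpoly) (pair_exponent i ?r ?q ?p)
      = (\<Sum>t\<in>{?q..?p}. if pair_exponent i ?r t (?p + ?q - t) = pair_exponent i ?r ?q ?p then 1 else 0)"
    using assms by (simp add: pi_monomial_def pi_pair_def lookup_sum lookup_single when_def)
  also have "\<dots> = (\<Sum>t\<in>{?q..?p}. if t = ?q then 1 else 0)"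
    by (rule sum.cong[OF refl]) (use pair_exponent_inj in fastforce)
  finally have "lookup (pi_monomial i e :: 'a mpoly) (pair_exponent i ?r ?q ?p) = 1"
    using assms by simp
  moreover have "e \<noteq> pair_exponent i ?r ?q ?p"
    using assms pair_exponent_inj pair_exponent_clear_pair by (metis less_irrefl)
  ultimately show ?thesis
    by (simp add: pibar_monomial_def permute_exponent_s lookup_minus lookup_single)
qed

section \<open>Dominance of tails\<close>

definition count_at_least :: "nat \<Rightarrow> (nat \<Rightarrow> nat) \<Rightarrow> nat \<Rightarrow> nat \<Rightarrow> nat" where
  "count_at_least n x j h = card {m\<in>{j..n}. h \<le> x m}"

text \<open>This order implies the comparison of all tail sums (\<open>tail_sum_mono_dominated\<close>) and,
  unlike that comparison, it is preserved by applying the same swap to both sides.\<close>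

definition dominated :: "nat \<Rightarrow> (nat \<Rightarrow> nat) \<Rightarrow> (nat \<Rightarrow> nat) \<Rightarrow> bool" where
  "dominated n x y \<longleftrightarrow> (\<forall>j h. count_at_least n x j h \<le> count_at_least n y j h)"

definition tail_sum :: "nat \<Rightarrow> (nat \<Rightarrow> nat) \<Rightarrow> nat \<Rightarrow> nat" where
  "tail_sum n x j = (\<Sum>m=j..n. x m)"

lemma count_at_least_Suc:
  "j \<le> n \<Longrightarrow> count_at_least n x j h = (if h \<le> x j then 1 else 0) + count_at_least n x (Suc j) h"
proof -
  assume "j \<le> n"
  then have "{m\<in>{j..n}. h \<le> x m} = (if h \<le> x j then insert j else id) {m\<in>{Suc j..n}. h \<le> x m}"
    by (auto simp: le_eq_less_or_eq Suc_le_eq)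
  then show ?thesis
    by (simp add: count_at_least_def)
qed

lemma tail_sum_Suc: "j \<le> n \<Longrightarrow> tail_sum n x j = x j + tail_sum n x (Suc j)"
  by (simp add: tail_sum_def sum.atLeast_Suc_atMost)

lemma count_at_least_swap_below:
  assumes "j \<le> i" "i < n"
  shows "count_at_least n (x \<circ> s i) j h = count_at_least n x j h"
proof -
  have "{m\<in>{j..n}. h \<le> (x \<circ> s i) m} = s i -` {m\<in>{j..n}. h \<le> x m}"
    using assms by (auto simp: s_def transpose_def)
  moreover have "card (s i -` {m\<in>{j..n}. h \<le> x m}) = card {m\<in>{j..n}. h \<le> x m}"
    using bij_s by (intro card_vimage_inj) (auto simp: bij_def)
  ultimately show ?thesis
    unfolding count_at_least_def by simp
qed

lemma count_at_least_swap_above: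
  "Suc i < j \<Longrightarrow> count_at_least n (x \<circ> s i) j h = count_at_least n x j h"
  unfolding count_at_least_def by (rule arg_cong[where f = card]) (auto simp: s_apply)

lemma count_at_least_swap_at:
  "i < n \<Longrightarrow> count_at_least n (x \<circ> s i) (Suc i) h
     = (if h \<le> x i then 1 else 0) + count_at_least n x (Suc (Suc i)) h"
  using count_at_least_Suc[of "Suc i" n "x \<circ> s i" h] count_at_least_swap_above[of i "Suc (Suc i)" n x h]
  by (simp add: s_apply)

lemma dominated_refl: "dominated n x x"
  by (simp add: dominated_def)

lemma dominated_trans: "dominated n x y \<Longrightarrow> dominated n y z \<Longrightarrow> dominated n x z"
  unfolding dominated_def by (meson le_trans)

lemma dominated_swap_descent:
  assumes "i < n" "y (Suc i) < y i"
  shows "dominated n y (y \<circ> s i)"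
  unfolding dominated_def
proof (intro allI)
  fix j h
  consider "j \<le> i" | "j = Suc i" | "Suc i < j"
    by linarith
  then show "count_at_least n y j h \<le> count_at_least n (y \<circ> s i) j h"
  proof cases
    case 2
    then show ?thesis
      using assms count_at_least_swap_at[of i n y h] count_at_least_Suc[of "Suc i" n y h] by auto
  qed (use assms count_at_least_swap_below count_at_least_swap_above in simp_all)
qed

lemma dominated_swap:
  assumes "i < n" "y (Suc i) < y i" "dominated n x y"
  shows "dominated n (x \<circ> s i) (y \<circ> s i)"
  unfolding dominated_def
proof (intro allI)
  fix j h
  have le: "count_at_least n x j' h \<le> count_at_least n y j' h" for j'
    using assms(3) by (simp add: dominated_def)
  have two: "count_at_least n z i h = (if h \<le> z i then 1 else 0) + (if h \<le> z (Suc i) then 1 else 0)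
      + count_at_least n z (Suc (Suc i)) h" for z
    using count_at_least_Suc[of i n z h] count_at_least_Suc[of "Suc i" n z h] assms(1) by simp
  consider "j \<le> i" | "j = Suc i" | "Suc i < j"
    by linarith
  then show "count_at_least n (x \<circ> s i) j h \<le> count_at_least n (y \<circ> s i) j h"
  proof cases
    case 2
    show ?thesis
    proof (cases "h \<le> y i")
      case True
      then show ?thesis
        using 2 le[of "Suc (Suc i)"] count_at_least_swap_at[OF assms(1)] by simp
    next
      case False
      \<comment> \<open>then neither \<open>y i\<close> nor \<open>y (i+1)\<close> is counted, and the bound comes from the tail at \<open>i\<close>\<close>
      with assms(2) le[of i] two[of x] two[of y] show ?thesis
        using 2 count_at_least_swap_at[OF assms(1)] by (simp split: if_splits)
    qed
  qed (use assms le count_at_least_swap_below count_at_least_swap_above in simp_all)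
qed

lemma tail_sum_eq_sum_count_at_least:
  assumes "\<forall>m\<in>{j..n}. x m \<le> H"
  shows "tail_sum n x j = (\<Sum>h=1..H. count_at_least n x j h)"
proof -
  have "x m = (\<Sum>h=1..H. if h \<le> x m then 1 else 0)" if "m \<in> {j..n}" for m
  proof -
    have "x m \<le> H"
      using assms that by blast
    then have "{h\<in>{1..H}. h \<le> x m} = {1..x m}"
      by auto
    then show ?thesis
      by (simp flip: sum.inter_filter)
  qed
  then have "tail_sum n x j = (\<Sum>m=j..n. \<Sum>h=1..H. if h \<le> x m then 1 else 0)"
    unfolding tail_sum_def by (rule sum.cong[OF refl])
  also have "\<dots> = (\<Sum>h=1..H. count_at_least n x j h)"
    by (subst sum.swap) (simp add: count_at_least_def sum.inter_filter[symmetric])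
  finally show ?thesis .
qed

lemma tail_sum_mono_dominated:
  assumes "dominated n x y"
  shows "tail_sum n x j \<le> tail_sum n y j"
proof -
  define H where "H = Max ((x ` {j..n}) \<union> (y ` {j..n}))"
  have "\<forall>m\<in>{j..n}. x m \<le> H" "\<forall>m\<in>{j..n}. y m \<le> H"
    by (simp_all add: H_def)
  then show ?thesis
    using assms by (simp add: tail_sum_eq_sum_count_at_least dominated_def sum_mono)
qed

section \<open>Hulls of exponent vectors\<close>

definition supported_on :: "nat \<Rightarrow> (nat \<Rightarrow> nat) \<Rightarrow> bool" where
  "supported_on n x \<longleftrightarrow> (\<forall>m. m \<notin> {1..n} \<longrightarrow> x m = 0)"

definition pairing :: "nat \<Rightarrow> (nat \<Rightarrow> int) \<Rightarrow> (nat \<Rightarrow> nat) \<Rightarrow> int" where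
  "pairing n \<phi> x = (\<Sum>m=1..n. \<phi> m * int (x m))"

text \<open>For finite \<open>V\<close> this says that \<open>c\<close> lies in the convex hull of \<open>V\<close>; it is stated through
  linear functionals, which is the only form in which the hull is used.\<close>

definition weakly_in_hull :: "nat \<Rightarrow> (nat \<Rightarrow> nat) set \<Rightarrow> (nat \<Rightarrow> nat) \<Rightarrow> bool" where
  "weakly_in_hull n V c \<longleftrightarrow> (\<forall>\<phi>. \<exists>x\<in>V. pairing n \<phi> c \<le> pairing n \<phi> x)"

lemma pairing_swap:
  assumes "1 \<le> i" "i < n"
  shows "pairing n \<phi> (x \<circ> s i) = pairing n (\<phi> \<circ> s i) x"
  unfolding pairing_def
  using sum.permute[OF s_permutes[OF assms], of "\<lambda>m. \<phi> (s i m) * int (x m)"] by (simp add: comp_def)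

lemma weakly_in_hull_swap:
  assumes "1 \<le> i" "i < n" "weakly_in_hull n V c"
  shows "weakly_in_hull n ((\<lambda>x. x \<circ> s i) ` V) (c \<circ> s i)"
  unfolding weakly_in_hull_def
proof
  fix \<phi>
  obtain x where "x \<in> V" "pairing n (\<phi> \<circ> s i) c \<le> pairing n (\<phi> \<circ> s i) x"
    using assms(3) unfolding weakly_in_hull_def by blast
  then show "\<exists>x\<in>(\<lambda>x. x \<circ> s i) ` V. pairing n \<phi> (c \<circ> s i) \<le> pairing n \<phi> x"
    using pairing_swap[OF assms(1,2)] by auto
qed

lemma linear_segment_le_max:
  fixes a b t u p q :: "'a::linordered_idom"
  assumes "t + u = p + q" "min p q \<le> u" "u \<le> max p q"
  shows "a * t + b * u \<le> max (a * p + b * q) (a * q + b * p)"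
proof -
  have t: "t = p + q - u"
    using assms(1) by (simp add: eq_diff_eq)
  have "a * t + b * u - (a * p + b * q) = (b - a) * (u - q)"
    "a * t + b * u - (a * q + b * p) = (b - a) * (u - p)"
    by (simp_all add: t algebra_simps)
  moreover have "(b - a) * (u - q) \<le> 0 \<or> (b - a) * (u - p) \<le> 0"
  proof (cases "a \<le> b")
    case True
    then show ?thesis
      using assms(3) by (auto simp: le_max_iff_disj intro: mult_nonneg_nonpos)
  next
    case False
    then show ?thesis
      using assms(2) by (auto simp: min_le_iff_disj intro: mult_nonpos_nonneg)
  qed
  ultimately show ?thesis
    by (auto simp: le_max_iff_disj)
qed

lemma pairing_swap_segment_le_max:
  assumes "1 \<le> i" "i < n" "on_swap_segment i e d"
  shows "pairing n \<phi> (lookup d) \<le> max (pairing n \<phi> (lookup e)) (pairing n \<phi> (lookup e \<circ> s i))"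
proof -
  let ?rest = "\<lambda>x. \<Sum>m\<in>{1..n} - {i, Suc i}. \<phi> m * int (x m)"
  have split: "pairing n \<phi> x = ?rest x + (\<phi> i * int (x i) + \<phi> (Suc i) * int (x (Suc i)))" for x
  proof -
    have I: "{1..n} = insert i (insert (Suc i) ({1..n} - {i, Suc i}))"
      using assms by auto
    show ?thesis
      unfolding pairing_def by (subst I) (simp add: algebra_simps)
  qed
  have "?rest (lookup d) = ?rest (lookup e)" "?rest (lookup e \<circ> s i) = ?rest (lookup e)"
    using assms(3) by (auto simp: on_swap_segment_def s_apply intro!: sum.cong)
  moreover have "\<phi> i * int (lookup d i) + \<phi> (Suc i) * int (lookup d (Suc i))
      \<le> max (\<phi> i * int (lookup e i) + \<phi> (Suc i) * int (lookup e (Suc i)))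
            (\<phi> i * int (lookup e (Suc i)) + \<phi> (Suc i) * int (lookup e i))"
    using assms(3) by (intro linear_segment_le_max) (auto simp: on_swap_segment_def)
  ultimately show ?thesis
    unfolding split by (simp add: s_apply max_add_distrib_left)
qed

lemma weakly_in_hull_swap_segment:
  assumes "1 \<le> i" "i < n" "weakly_in_hull n V (lookup e)" "on_swap_segment i e d"
  shows "weakly_in_hull n (V \<union> (\<lambda>x. x \<circ> s i) ` V) (lookup d)"
  unfolding weakly_in_hull_def
proof
  fix \<phi>
  have "weakly_in_hull n ((\<lambda>x. x \<circ> s i) ` V) (lookup e \<circ> s i)"
    using assms(1-3) by (rule weakly_in_hull_swap)
  then have "\<exists>x\<in>V \<union> (\<lambda>x. x \<circ> s i) ` V. pairing n \<phi> c \<le> pairing n \<phi> x"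
    if "c = lookup e \<or> c = lookup e \<circ> s i" for c
    using that assms(3) unfolding weakly_in_hull_def by blast
  then show "\<exists>x\<in>V \<union> (\<lambda>x. x \<circ> s i) ` V. pairing n \<phi> (lookup d) \<le> pairing n \<phi> x"
    using pairing_swap_segment_le_max[OF assms(1,2,4), of \<phi>] by (metis max_def order.trans)
qed

lemma pairing_tail_indicator:
  assumes "1 \<le> j"
  shows "pairing n (\<lambda>m. if j \<le> m then 1 else 0) x = int (tail_sum n x j)"
proof -
  have "pairing n (\<lambda>m. if j \<le> m then 1 else 0) x = (\<Sum>m\<in>{m\<in>{1..n}. j \<le> m}. int (x m))"
    unfolding pairing_def sum.inter_filter[OF finite_atLeastAtMost] by (intro sum.cong) auto
  also have "{m\<in>{1..n}. j \<le> m} = {j..n}"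
    using assms by auto
  finally show ?thesis
    by (simp add: tail_sum_def)
qed

lemma weakly_in_hull_tail_sum:
  assumes "weakly_in_hull n V c" "1 \<le> j"
  obtains x where "x \<in> V" "tail_sum n c j \<le> tail_sum n x j"
proof -
  obtain x where "x \<in> V" "pairing n (\<lambda>m. if j \<le> m then 1 else 0) c \<le> pairing n (\<lambda>m. if j \<le> m then 1 else 0) x"
    using assms(1) unfolding weakly_in_hull_def by blast
  with that show ?thesis
    by (simp add: pairing_tail_indicator[OF assms(2)])
qed

lemma neglex_less_if_tail_sums_le:
  assumes "supported_on n (lookup c)" "supported_on n (lookup b)"
    and "\<And>j. 1 \<le> j \<Longrightarrow> tail_sum n (lookup c) j \<le> tail_sum n (lookup b) j" and "c \<noteq> b"
  shows "neglex_less c b"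
proof -
  let ?D = "{m. lookup c m \<noteq> lookup b m}"
  have D: "?D \<subseteq> {1..n}"
  proof
    fix m
    assume "m \<in> ?D"
    then show "m \<in> {1..n}"
      using assms(1,2) unfolding supported_on_def by (cases "m \<in> {1..n}") auto
  qed
  then have fin: "finite ?D"
    using finite_subset by blast
  have "?D \<noteq> {}"
  proof
    assume "?D = {}"
    then have "c = b"
      by (intro poly_mapping_eqI) auto
    with assms(4) show False ..
  qed
  define J where "J = Max ?D"
  have top: "J \<in> ?D"
    unfolding J_def using fin \<open>?D \<noteq> {}\<close> by (rule Max_in)
  have above: "\<forall>l>J. lookup c l = lookup b l"
    unfolding J_def using fin Max_ge not_le by blast
  have J: "1 \<le> J" "J \<le> n"
    using top D by auto
  have "tail_sum n (lookup c) (Suc J) = tail_sum n (lookup b) (Suc J)"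
    unfolding tail_sum_def using above by (auto intro!: sum.cong)
  moreover have "lookup c J + tail_sum n (lookup c) (Suc J) \<le> lookup b J + tail_sum n (lookup b) (Suc J)"
    using assms(3)[OF J(1)] by (simp add: tail_sum_Suc[OF J(2)])
  ultimately have "lookup c J \<le> lookup b J"
    by simp
  then have "lookup c J < lookup b J"
    using top by auto
  then show ?thesis
    unfolding neglex_less_def using above by blast
qed

section \<open>Reduced words\<close>

definition inversions :: "nat \<Rightarrow> (nat \<Rightarrow> nat) \<Rightarrow> (nat \<times> nat) set" where
  "inversions n w = {(i, j). 1 \<le> i \<and> i < j \<and> j \<le> n \<and> w i > w j}"

lemma finite_inversions: "finite (inversions n w)"
  by (rule finite_subset[of _ "{1..n} \<times> {1..n}"]) (auto simp: inversions_def)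

lemma s_less_s_iff:
  "x \<noteq> y \<Longrightarrow> \<not> (x = i \<and> y = Suc i) \<Longrightarrow> \<not> (x = Suc i \<and> y = i) \<Longrightarrow> s i y < s i x \<longleftrightarrow> y < x"
  by (auto simp: s_def transpose_def)

lemma inversions_s_comp:
  assumes v: "v permutes {1..n}" and i: "1 \<le> i" "i < n"
    and pq: "v p = i" "v q = Suc i" "p < q"
  shows "inversions n (s i \<circ> v) = insert (p, q) (inversions n v)" and "(p, q) \<notin> inversions n v"
proof -
  have "p \<in> {1..n}" "q \<in> {1..n}"
    using permutes_in_image[OF v, of p] permutes_in_image[OF v, of q] pq i by simp_all
  have inj: "v x = v y \<longleftrightarrow> x = y" for x y
    using permutes_inj[OF v] by (simp add: inj_eq)
  have swap_order: "s i (v b) < s i (v a) \<longleftrightarrow> v b < v a \<or> (a, b) = (p, q)" if "a < b" for a b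
  proof (cases "(a, b) = (p, q)")
    case True
    then show ?thesis
      using pq by (simp add: s_apply)
  next
    case False
    have "\<not> (v a = i \<and> v b = Suc i)"
    proof
      assume "v a = i \<and> v b = Suc i"
      then have "v a = v p" "v b = v q"
        using pq by simp_all
      then have "a = p" "b = q"
        by (simp_all add: inj)
      with False show False
        by simp
    qed
    moreover have "\<not> (v a = Suc i \<and> v b = i)"
    proof
      assume "v a = Suc i \<and> v b = i"
      then have "v a = v q" "v b = v p"
        using pq by simp_all
      then have "a = q" "b = p"
        by (simp_all add: inj)
      with that pq(3) show False
        by simp
    qed
    moreover have "v a \<noteq> v b"
      using that by (simp add: inj)
    ultimately show ?thesis
      using False by (auto simp: s_less_s_iff)
  qed
  show "(p, q) \<notin> inversions n v"
    using pq by (simp add: inversions_def)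
  show "inversions n (s i \<circ> v) = insert (p, q) (inversions n v)"
    using \<open>p \<in> {1..n}\<close> \<open>q \<in> {1..n}\<close> pq(3) by (auto simp: inversions_def swap_order)
qed

lemma inv_count_s_comp:
  assumes v: "v permutes {1..n}" and i: "1 \<le> i" "i < n"
  shows "inv v i < inv v (Suc i) \<Longrightarrow> inv_count n (s i \<circ> v) = Suc (inv_count n v)"
    and "inv v (Suc i) < inv v i \<Longrightarrow> Suc (inv_count n (s i \<circ> v)) = inv_count n v"
proof -
  have inv_count_eq: "inv_count n w = card (inversions n w)" for w
    by (simp add: inv_count_def inversions_def)
  have step: "inv_count n (s i \<circ> u) = Suc (inv_count n u)"
    if u: "u permutes {1..n}" and less: "inv u i < inv u (Suc i)" for u
    using inversions_s_comp[OF u i, of "inv u i" "inv u (Suc i)"] less u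
    by (simp add: inv_count_eq finite_inversions permutes_inverses(1))
  show "inv v i < inv v (Suc i) \<Longrightarrow> inv_count n (s i \<circ> v) = Suc (inv_count n v)"
    using step[OF v] .
  assume "inv v (Suc i) < inv v i"
  moreover have sv: "s i \<circ> v permutes {1..n}"
    using v s_permutes[OF i] by (rule permutes_compose)
  moreover have "inv (s i \<circ> v) = inv v \<circ> s i"
    using v by (simp add: o_inv_distrib permutes_bij bij_s inv_s)
  moreover have "s i \<circ> (s i \<circ> v) = v"
    by (simp add: fun_eq_iff)
  ultimately show "Suc (inv_count n (s i \<circ> v)) = inv_count n v"
    using step[OF sv] by (simp add: s_apply)
qed

lemma word_perm_Nil [simp]: "word_perm [] = id"
  by (simp add: word_perm_def)

lemma word_perm_Cons [simp]: "word_perm (i # ws) = s i \<circ> word_perm ws"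
  by (simp add: word_perm_def)

lemma word_perm_permutes: "\<forall>i\<in>set ws. 1 \<le> i \<and> i < n \<Longrightarrow> word_perm ws permutes {1..n}"
proof (induction ws)
  case (Cons i ws)
  then show ?case
    unfolding word_perm_Cons by (intro permutes_compose s_permutes) simp_all
qed (simp add: permutes_id)

lemma inv_count_word_perm_le: "\<forall>i\<in>set ws. 1 \<le> i \<and> i < n \<Longrightarrow> inv_count n (word_perm ws) \<le> length ws"
proof (induction ws)
  case Nil
  show ?case
    by (simp add: inv_count_def card_eq_0_iff)
next
  case (Cons i ws)
  let ?v = "word_perm ws"
  have v: "?v permutes {1..n}" and i: "1 \<le> i" "i < n"
    using Cons.prems word_perm_permutes[of ws n] by auto
  have "inv ?v i \<noteq> inv ?v (Suc i)"
    using permutes_inj[OF permutes_inv[OF v]] by (metis inj_eq n_not_Suc_n)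
  then have "inv_count n (s i \<circ> ?v) \<le> Suc (inv_count n ?v)"
    using inv_count_s_comp[OF v i] by (cases "inv ?v i < inv ?v (Suc i)") auto
  moreover have "inv_count n ?v \<le> length ws"
    using Cons by simp
  ultimately show ?case
    unfolding word_perm_Cons length_Cons by linarith
qed

lemma reduced_word_Cons:
  assumes "reduced_word n w (i # ws)"
  shows "reduced_word n (word_perm ws) ws" and "inv (word_perm ws) i < inv (word_perm ws) (Suc i)"
proof -
  let ?v = "word_perm ws"
  have letters: "\<forall>j\<in>set ws. 1 \<le> j \<and> j < n" and i: "1 \<le> i" "i < n"
    and len: "inv_count n (s i \<circ> ?v) = Suc (length ws)"
    using assms by (auto simp: reduced_word_def)
  have v: "?v permutes {1..n}"
    using letters by (rule word_perm_permutes)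
  have le: "inv_count n ?v \<le> length ws"
    using letters by (rule inv_count_word_perm_le)
  have "inv ?v i \<noteq> inv ?v (Suc i)"
    using permutes_inj[OF permutes_inv[OF v]] by (metis inj_eq n_not_Suc_n)
  moreover have "\<not> inv ?v (Suc i) < inv ?v i"
    using inv_count_s_comp(2)[OF v i] len le by auto
  ultimately show asc: "inv ?v i < inv ?v (Suc i)"
    by simp
  show "reduced_word n ?v ws"
    using inv_count_s_comp(1)[OF v i asc] len letters by (simp add: reduced_word_def)
qed

lemma Des_perm_subset_s_comp:
  assumes v: "v permutes {1..n}" and "inv v i < inv v (Suc i)"
  shows "Des_perm n v \<subseteq> Des_perm n (s i \<circ> v)"
proof
  fix j
  assume "j \<in> Des_perm n v"
  then have j: "1 \<le> j" "j < n" "v (Suc j) < v j"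
    by (auto simp: Des_perm_def)
  have "\<not> (v j = Suc i \<and> v (Suc j) = i)"
  proof
    assume "v j = Suc i \<and> v (Suc j) = i"
    then have "inv v (Suc i) = j" "inv v i = Suc j"
      using permutes_inverses(2)[OF v] by metis+
    with assms(2) show False
      by simp
  qed
  then have "s i (v (Suc j)) < s i (v j)"
    using j(3) by (subst s_less_s_iff) auto
  with j(1,2) show "j \<in> Des_perm n (s i \<circ> v)"
    by (simp add: Des_perm_def)
qed

lemma permutes_eq_id_if_increasing:
  assumes w: "w permutes {1..n}" and inc: "\<And>j. 1 \<le> j \<Longrightarrow> j < n \<Longrightarrow> w j < w (Suc j)"
  shows "w = id"
proof
  fix k
  show "w k = id k"
  proof (cases "k \<in> {1..n}")
    case True
    \<comment> \<open>\<open>w j - j\<close> is weakly increasing on \<open>[1, n]\<close> and \<open>1 \<le> w 1\<close>, \<open>w n \<le> n\<close>\<close>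
    let ?g = "\<lambda>j. int (w j) - int j"
    have mono: "?g j \<le> ?g (Suc j)" if "j \<in> {1..<n}" for j
      using inc[of j] that by auto
    have "?g 1 \<le> ?g k" "?g k \<le> ?g n"
      by (rule lift_Suc_mono_le_ivl[where f = ?g and N = "{1..<n}", OF mono], use True in auto)+
    moreover have "1 \<le> w 1" "w n \<le> n"
      using True permutes_in_image[OF w, of 1] permutes_in_image[OF w, of n] by auto
    ultimately show ?thesis
      by simp
  qed (simp add: permutes_not_in[OF w])
qed

lemma exists_reduced_word:
  assumes "w permutes {1..n}"
  shows "\<exists>ws. reduced_word n w ws"
  using assms
proof (induction "inv_count n w" arbitrary: w rule: less_induct)
  case less
  show ?case
  proof (cases "\<exists>i. 1 \<le> i \<and> i < n \<and> inv w (Suc i) < inv w i")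
    case True
    then obtain i where i: "1 \<le> i" "i < n" "inv w (Suc i) < inv w i"
      by blast
    have shorter: "Suc (inv_count n (s i \<circ> w)) = inv_count n w"
      using inv_count_s_comp(2)[OF less.prems i] .
    moreover have "s i \<circ> w permutes {1..n}"
      using less.prems s_permutes[OF i(1,2)] by (rule permutes_compose)
    ultimately obtain ws where ws: "reduced_word n (s i \<circ> w) ws"
      using less.hyps by fastforce
    have "word_perm (i # ws) = w"
      using ws by (simp add: reduced_word_def comp_assoc[symmetric] fun_eq_iff)
    with ws i shorter have "reduced_word n w (i # ws)"
      by (simp add: reduced_word_def)
    then show ?thesis ..
  next
    case False
    have "inv w j \<noteq> inv w (Suc j)" for j
      using permutes_inj[OF permutes_inv[OF less.prems]] by (metis inj_eq n_not_Suc_n)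
    with False have "inv w = id"
      by (intro permutes_eq_id_if_increasing[OF permutes_inv[OF less.prems]]) (auto simp: linorder_neq_iff)
    then have "w = id"
      by (metis inv_id inv_inv_eq permutes_bij[OF less.prems])
    then have "reduced_word n w []"
      by (simp add: reduced_word_def inv_count_def card_eq_0_iff)
    then show ?thesis ..
  qed
qed

lemma strict_descent_at_swap:
  assumes v: "v permutes {1..n}" and i: "1 \<le> i" "i < n"
    and pq: "v p = i" "v q = Suc i" "p < q"
    and dec: "\<And>j. 1 \<le> j \<Longrightarrow> j < n \<Longrightarrow> a (Suc j) \<le> a j"
    and des: "Des_perm n (s i \<circ> v) \<subseteq> Des_perm n a"
  shows "a q < a p"
proof (rule ccontr)
  assume "\<not> a q < a p"
  have "p \<in> {1..n}" "q \<in> {1..n}"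
    using permutes_in_image[OF v, of p] permutes_in_image[OF v, of q] pq i by simp_all
  have antimono: "a (Suc j) \<le> a j" if "j \<in> {p..<q}" for j
    using dec that \<open>p \<in> {1..n}\<close> \<open>q \<in> {1..n}\<close> by auto
  \<comment> \<open>\<open>a\<close> is constant on \<open>[p, q]\<close>, so \<open>s\<^sub>i \<circ> v\<close> has no descent there\<close>
  have ascent: "(s i \<circ> v) j < (s i \<circ> v) (Suc j)" if j: "j \<in> {p..<q}" for j
  proof -
    have "a q \<le> a (Suc j)" "a j \<le> a p"
      using j by (auto intro!: lift_Suc_antimono_le_ivl[where f = a and N = "{p..<q}", OF antimono])
    then have "a (Suc j) = a j"
      using antimono[OF j] \<open>\<not> a q < a p\<close> by simp
    then have "j \<notin> Des_perm n (s i \<circ> v)"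
      using des by (auto simp: Des_perm_def)
    moreover have "(s i \<circ> v) j \<noteq> (s i \<circ> v) (Suc j)"
      using permutes_inj[OF permutes_compose[OF v s_permutes[OF i]]] by (metis inj_eq n_not_Suc_n)
    ultimately show ?thesis
      using j \<open>p \<in> {1..n}\<close> \<open>q \<in> {1..n}\<close> by (auto simp: Des_perm_def)
  qed
  have "(s i \<circ> v) p < (s i \<circ> v) q"
    by (rule lift_Suc_mono_less_ivl[where f = "s i \<circ> v" and N = "{p..<q}"]) (use ascent pq(3) in auto)
  then show False
    using pq by (simp add: s_apply)
qed

section \<open>The leading term of \<open>pibar_w\<close> on a monomial\<close>

definition pibar_word :: "nat list \<Rightarrow> 'a::field mpoly \<Rightarrow> 'a mpoly" where
  "pibar_word ws = foldr (\<lambda>i g. pibar_op i \<circ> g) ws id"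

lemma pibar_word_Nil [simp]: "pibar_word [] f = f"
  by (simp add: pibar_word_def)

lemma pibar_word_Cons [simp]: "pibar_word (i # ws) f = pibar_op i (pibar_word ws f)"
  by (simp add: pibar_word_def)

lemma pibar_w_eq_pibar_word: "pibar_w n w = pibar_word (SOME ws. reduced_word n w ws)"
  by (simp add: pibar_w_def pibar_word_def)

text \<open>The exponents \<open>a \<circ> u\<close> for \<open>u\<close> the product of a subword of \<open>ws\<close>: the vertices of a
  polytope containing every exponent of \<open>pibar_word ws x\<^sup>a\<close>.\<close>

definition subword_orbit :: "nat list \<Rightarrow> (nat \<Rightarrow> nat) \<Rightarrow> (nat \<Rightarrow> nat) set" where
  "subword_orbit ws a = foldr (\<lambda>i V. V \<union> (\<lambda>x. x \<circ> s i) ` V) ws {a}"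

lemma subword_orbit_Nil [simp]: "subword_orbit [] a = {a}"
  by (simp add: subword_orbit_def)

lemma subword_orbit_Cons [simp]:
  "subword_orbit (i # ws) a = subword_orbit ws a \<union> (\<lambda>x. x \<circ> s i) ` subword_orbit ws a"
  by (simp add: subword_orbit_def)

definition leading_invariant :: "nat \<Rightarrow> (nat \<Rightarrow> nat) set \<Rightarrow> (nat \<Rightarrow>\<^sub>0 nat) \<Rightarrow> 'a::field mpoly \<Rightarrow> bool" where
  "leading_invariant n V b f \<longleftrightarrow> lookup f b = 1 \<and>
     (\<forall>c\<in>keys f. supported_on n (lookup c) \<and> weakly_in_hull n V (lookup c)) \<and>
     (\<forall>x\<in>V. dominated n x (lookup b))"

text \<open>Comparing the tail sums from \<open>i + 1\<close> of \<open>e\<close> and of \<open>e \<circ> s\<^sub>i\<close> with those of \<open>b\<close>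
  bounds both \<open>e\<^sub>i\<close> and \<open>e\<^sub>i\<^sub>+\<^sub>1\<close> by the corresponding entries of \<open>b\<close>.\<close>

lemma eq_if_on_swap_segment_swap:
  assumes i: "1 \<le> i" "i < n"
    and hull: "weakly_in_hull n V (lookup e)" and dom: "\<forall>x\<in>V. dominated n x (lookup b)"
    and descent: "lookup b (Suc i) < lookup b i"
    and seg: "on_swap_segment i e (permute_exponent (s i) b)"
  shows "e = b"
proof -
  have swapped: "lookup (permute_exponent (s i) b) m = lookup b (s i m)" for m
    by (simp add: lookup_permute_exponent[OF bij_s] inv_s)
  have off: "lookup e m = lookup b m" if "m \<noteq> i" "m \<noteq> Suc i" for m
    using seg that by (auto simp: on_swap_segment_def swapped s_apply)
  have pair_sum: "lookup e i + lookup e (Suc i) = lookup b i + lookup b (Suc i)"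
    using seg by (auto simp: on_swap_segment_def swapped s_apply)
  have high: "tail_sum n (lookup e) (Suc (Suc i)) = tail_sum n (lookup b) (Suc (Suc i))"
    "tail_sum n (lookup e \<circ> s i) (Suc (Suc i)) = tail_sum n (lookup e) (Suc (Suc i))"
    "tail_sum n (lookup b \<circ> s i) (Suc (Suc i)) = tail_sum n (lookup b) (Suc (Suc i))"
    unfolding tail_sum_def by (auto intro!: sum.cong simp: off s_apply)
  obtain x where "x \<in> V" "tail_sum n (lookup e) (Suc i) \<le> tail_sum n x (Suc i)"
    using weakly_in_hull_tail_sum[OF hull, of "Suc i"] by auto
  then have "tail_sum n (lookup e) (Suc i) \<le> tail_sum n (lookup b) (Suc i)"
    using dom tail_sum_mono_dominated order_trans by blast
  then have upper1: "lookup e (Suc i) \<le> lookup b (Suc i)"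
    using high(1) i by (simp add: tail_sum_Suc)
  obtain y where "y \<in> (\<lambda>x. x \<circ> s i) ` V" "tail_sum n (lookup e \<circ> s i) (Suc i) \<le> tail_sum n y (Suc i)"
    using weakly_in_hull_tail_sum[OF weakly_in_hull_swap[OF i hull], of "Suc i"] by auto
  moreover have "dominated n y (lookup b \<circ> s i)" if "y \<in> (\<lambda>x. x \<circ> s i) ` V" for y
    using that dom dominated_swap[OF i(2) descent] by auto
  ultimately have "tail_sum n (lookup e \<circ> s i) (Suc i) \<le> tail_sum n (lookup b \<circ> s i) (Suc i)"
    using tail_sum_mono_dominated order_trans by blast
  then have upper0: "lookup e i \<le> lookup b i"
    using high i by (simp add: tail_sum_Suc s_apply)
  have "lookup e i = lookup b i" "lookup e (Suc i) = lookup b (Suc i)"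
    using upper0 upper1 pair_sum by linarith+
  then show "e = b"
    by (intro poly_mapping_eqI) (metis off)
qed

lemma leading_invariant_pibar_op:
  assumes i: "1 \<le> i" "i < n" and inv: "leading_invariant n V b f"
    and descent: "lookup b (Suc i) < lookup b i"
  shows "leading_invariant n (V \<union> (\<lambda>x. x \<circ> s i) ` V) (permute_exponent (s i) b) (pibar_op i f)"
proof -
  let ?b' = "permute_exponent (s i) b"
  have lead: "lookup f b = 1"
    and keys_f: "\<And>e. e \<in> keys f \<Longrightarrow> supported_on n (lookup e) \<and> weakly_in_hull n V (lookup e)"
    and dom: "\<forall>x\<in>V. dominated n x (lookup b)"
    using inv by (auto simp: leading_invariant_def)
  have swapped: "lookup ?b' = lookup b \<circ> s i"
    by (simp add: fun_eq_iff lookup_permute_exponent[OF bij_s] inv_s)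
  have miss: "lookup (pibar_monomial i e :: 'a mpoly) ?b' = 0" if "e \<in> keys f" "e \<noteq> b" for e
  proof (rule ccontr)
    assume "lookup (pibar_monomial i e :: 'a mpoly) ?b' \<noteq> 0"
    then have "on_swap_segment i e ?b'"
      by (intro keys_pibar_monomial) (simp add: in_keys_iff)
    then have "e = b"
      using eq_if_on_swap_segment_swap[OF i _ dom descent] keys_f[OF that(1)] by blast
    with that(2) show False ..
  qed
  have "lookup (pibar_op i f) ?b' = (\<Sum>e\<in>keys f. lookup f e * lookup (pibar_monomial i e) ?b')"
    unfolding pibar_op_eq_sum lookup_sum lookup_const_mult ..
  also have "\<dots> = lookup f b * lookup (pibar_monomial i b :: 'a mpoly) ?b'
      + (\<Sum>e\<in>keys f - {b}. lookup f e * lookup (pibar_monomial i e) ?b')"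
    using lead by (intro sum.remove) (simp_all add: in_keys_iff)
  also have "(\<Sum>e\<in>keys f - {b}. lookup f e * lookup (pibar_monomial i e :: 'a mpoly) ?b') = 0"
    using miss by (intro sum.neutral) simp
  also have "lookup f b * lookup (pibar_monomial i b :: 'a mpoly) ?b' + 0 = 1"
    using lead lookup_pibar_monomial_swap[OF descent] by simp
  finally have lead': "lookup (pibar_op i f) ?b' = 1" .
  have keys': "supported_on n (lookup c) \<and> weakly_in_hull n (V \<union> (\<lambda>x. x \<circ> s i) ` V) (lookup c)"
    if "c \<in> keys (pibar_op i f)" for c
  proof -
    have "c \<in> (\<Union>e\<in>keys f. keys (const (lookup f e) * pibar_monomial i e :: 'a mpoly))"
      using that unfolding pibar_op_eq_sum by (rule subsetD[OF keys_sum])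
    then obtain e where e: "e \<in> keys f" "c \<in> keys (pibar_monomial i e :: 'a mpoly)"
      using keys_const_mult by blast
    then have seg: "on_swap_segment i e c"
      by (intro keys_pibar_monomial)
    then have "lookup c m = lookup e m" if "m \<notin> {1..n}" for m
      using that i by (auto simp: on_swap_segment_def)
    then show ?thesis
      using keys_f[OF e(1)] weakly_in_hull_swap_segment[OF i _ seg] by (auto simp: supported_on_def)
  qed
  have dom': "dominated n x (lookup ?b')" if "x \<in> V \<union> (\<lambda>x. x \<circ> s i) ` V" for x
    using that dom dominated_trans[OF _ dominated_swap_descent[OF i(2) descent]]
      dominated_swap[OF i(2) descent] unfolding swapped by blast
  show ?thesis
    using lead' keys' dom' by (simp add: leading_invariant_def)
qed

lemma permute_exponent_comp:
  "bij u \<Longrightarrow> bij v \<Longrightarrow> permute_exponent (u \<circ> v) e = permute_exponent u (permute_exponent v e)"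
  by (rule poly_mapping_eqI) (simp add: lookup_permute_exponent bij_comp o_inv_distrib)

lemma leading_invariant_pibar_word:
  assumes supp: "supported_on n (lookup a)"
    and dec: "\<And>j. 1 \<le> j \<Longrightarrow> j < n \<Longrightarrow> lookup a (Suc j) \<le> lookup a j"
  shows "reduced_word n w ws \<Longrightarrow> Des_perm n w \<subseteq> Des_perm n (lookup a) \<Longrightarrow>
    leading_invariant n (subword_orbit ws (lookup a)) (permute_exponent w a)
      (pibar_word ws (monomial a :: 'a::field mpoly))"
proof (induction ws arbitrary: w)
  case Nil
  then have "w = id"
    by (simp add: reduced_word_def)
  then have "permute_exponent w a = a"
    by (simp only: permute_exponent_id)
  then show ?case
    using supp by (simp add: leading_invariant_def weakly_in_hull_def dominated_refl)
next
  case (Cons i ws)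
  let ?v = "word_perm ws"
  have red: "reduced_word n ?v ws" and asc: "inv ?v i < inv ?v (Suc i)"
    using reduced_word_Cons[OF Cons.prems(1)] by blast+
  have letters: "\<forall>j\<in>set (i # ws). 1 \<le> j \<and> j < n" and w: "w = s i \<circ> ?v"
    using Cons.prems(1) by (auto simp: reduced_word_def)
  have i: "1 \<le> i" "i < n" and v: "?v permutes {1..n}"
    using letters word_perm_permutes[of ws n] by auto
  have "Des_perm n ?v \<subseteq> Des_perm n (lookup a)"
    using Des_perm_subset_s_comp[OF v asc] Cons.prems(2) w by blast
  then have IH: "leading_invariant n (subword_orbit ws (lookup a)) (permute_exponent ?v a)
      (pibar_word ws (monomial a :: 'a mpoly))"
    using Cons.IH[OF red] by blast
  have pos: "?v (inv ?v i) = i" "?v (inv ?v (Suc i)) = Suc i"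
    using permutes_inverses(1)[OF v] by simp_all
  have "lookup a (inv ?v (Suc i)) < lookup a (inv ?v i)"
    using strict_descent_at_swap[where a = "lookup a", OF v i pos asc dec] Cons.prems(2) w by blast
  then have "lookup (permute_exponent ?v a) (Suc i) < lookup (permute_exponent ?v a) i"
    using v by (simp add: lookup_permute_exponent permutes_bij)
  moreover have "permute_exponent (s i) (permute_exponent ?v a) = permute_exponent w a"
    unfolding w by (rule permute_exponent_comp[OF bij_s permutes_bij[OF v], symmetric])
  ultimately show ?case
    using leading_invariant_pibar_op[OF i IH] by simp
qed

lemma neglex_less_asym: "neglex_less a b \<Longrightarrow> \<not> neglex_less b a"
proof
  assume "neglex_less a b" "neglex_less b a"
  then obtain j j' where j: "lookup a j < lookup b j" "\<forall>l>j. lookup a l = lookup b l"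
    and j': "lookup b j' < lookup a j'" "\<forall>l>j'. lookup b l = lookup a l"
    unfolding neglex_less_def by blast
  consider "j < j'" | "j = j'" | "j' < j"
    by linarith
  then show False
    by cases (use j j' in \<open>fastforce+\<close>)
qed

lemma lead_term_eqI:
  assumes "lookup f b = 1" and "\<And>c. c \<in> keys f \<Longrightarrow> c \<noteq> b \<Longrightarrow> neglex_less c b"
  shows "lead_term (f :: 'a::field mpoly) = monomial b"
proof -
  have "b \<in> keys f"
    using assms(1) by (simp add: in_keys_iff)
  have "lead_monom f = b"
    unfolding lead_monom_def
  proof (rule the_equality)
    show "b \<in> keys f \<and> (\<forall>c\<in>keys f. c \<noteq> b \<longrightarrow> neglex_less c b)"
      using \<open>b \<in> keys f\<close> assms(2) by blast
    show "m = b" if "m \<in> keys f \<and> (\<forall>c\<in>keys f. c \<noteq> m \<longrightarrow> neglex_less c m)" for m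
    proof (rule ccontr)
      assume "m \<noteq> b"
      then have "neglex_less m b" "neglex_less b m"
        using that \<open>b \<in> keys f\<close> assms(2) by auto
      then show False
        by (simp add: neglex_less_asym)
    qed
  qed
  then show ?thesis
    using assms(1) by (simp add: lead_term_def)
qed

lemma supported_on_permute_exponent:
  assumes "w permutes {1..n}" "supported_on n (lookup a)"
  shows "supported_on n (lookup (permute_exponent w a))"
  unfolding supported_on_def
proof (intro allI impI)
  fix m :: nat
  assume "m \<notin> {1..n}"
  then have "inv w m = m"
    using permutes_not_in[OF permutes_inv[OF assms(1)]] by blast
  with \<open>m \<notin> {1..n}\<close> show "lookup (permute_exponent w a) m = 0"
    using assms(2) by (simp add: supported_on_def lookup_permute_exponent permutes_bij[OF assms(1)])
qed

lemma lead_term_pibar_w_monomial: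
  assumes supp: "supported_on n (lookup a)"
    and dec: "\<And>j. 1 \<le> j \<Longrightarrow> j < n \<Longrightarrow> lookup a (Suc j) \<le> lookup a j"
    and w: "w permutes {1..n}" and des: "Des_perm n w \<subseteq> Des_perm n (lookup a)"
  shows "lead_term (pibar_w n w (monomial a :: 'a::field mpoly)) = act w (monomial a)"
proof -
  define ws where "ws = (SOME ws. reduced_word n w ws)"
  have "reduced_word n w ws"
    unfolding ws_def using exists_reduced_word[OF w] by (rule someI_ex)
  then have inv: "leading_invariant n (subword_orbit ws (lookup a)) (permute_exponent w a)
      (pibar_word ws (monomial a) :: 'a mpoly)"
    using leading_invariant_pibar_word[OF supp dec] des by blast
  let ?f = "pibar_word ws (monomial a) :: 'a mpoly" and ?b = "permute_exponent w a"
  have "neglex_less c ?b" if "c \<in> keys ?f" "c \<noteq> ?b" for c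
  proof (rule neglex_less_if_tail_sums_le)
    fix j :: nat
    assume "1 \<le> j"
    have "weakly_in_hull n (subword_orbit ws (lookup a)) (lookup c)"
      using inv that(1) unfolding leading_invariant_def by blast
    then obtain x where "x \<in> subword_orbit ws (lookup a)" "tail_sum n (lookup c) j \<le> tail_sum n x j"
      using \<open>1 \<le> j\<close> by (rule weakly_in_hull_tail_sum)
    then show "tail_sum n (lookup c) j \<le> tail_sum n (lookup ?b) j"
      using inv tail_sum_mono_dominated order_trans unfolding leading_invariant_def by blast
  qed (use inv that supported_on_permute_exponent[OF w supp] in \<open>auto simp: leading_invariant_def\<close>)
  then have "lead_term ?f = monomial ?b"
    using inv by (intro lead_term_eqI) (auto simp: leading_invariant_def)
  then show ?thesis
    by (simp add: pibar_w_eq_pibar_word ws_def[symmetric] act_monomial)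
qed

section \<open>Compositions and the exponents of \<open>x\<^sub>D\<^sub>,\<^sub>i\<close>\<close>

lemma sum_list_take_strict_mono:
  fixes \<alpha> :: "nat list"
  assumes "\<forall>a\<in>set \<alpha>. 0 < a" "j < j'" "j' \<le> length \<alpha>"
  shows "sum_list (take j \<alpha>) < sum_list (take j' \<alpha>)"
proof -
  have "take j' \<alpha> = take j \<alpha> @ take (j' - j) (drop j \<alpha>)"
    using take_add[of j "j' - j" \<alpha>] assms(2) by simp
  moreover have "take (j' - j) (drop j \<alpha>) \<noteq> []" "\<forall>a\<in>set (take (j' - j) (drop j \<alpha>)). 0 < a"
    using assms set_take_subset set_drop_subset by fastforce+
  then have "0 < sum_list (take (j' - j) (drop j \<alpha>))"
    by (cases "take (j' - j) (drop j \<alpha>)") auto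
  ultimately show ?thesis
    by simp
qed

lemma Des_comp_bounds:
  assumes "is_comp n \<alpha>" "d \<in> Des_comp \<alpha>"
  shows "hd \<alpha> \<le> d" "d < n"
proof -
  obtain j where j: "d = sum_list (take j \<alpha>)" "1 \<le> j" "j < length \<alpha>"
    using assms(2) by (auto simp: Des_comp_def)
  have pos: "\<forall>a\<in>set \<alpha>. 0 < a"
    using assms(1) by (simp add: is_comp_def)
  have "hd \<alpha> = sum_list (take 1 \<alpha>)"
    using j by (cases \<alpha>) auto
  then show "hd \<alpha> \<le> d"
    using j pos sum_list_take_strict_mono[of \<alpha> 1 j] by (cases "j = 1") auto
  show "d < n"
    using j pos sum_list_take_strict_mono[of \<alpha> j "length \<alpha>"] assms(1) by (simp add: is_comp_def)
qed

lemma Des_comp_image: "Des_comp \<alpha> = (\<lambda>j. sum_list (take j \<alpha>)) ` {1..<length \<alpha>}"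
  by (auto simp: Des_comp_def)

lemma finite_Des_comp: "finite (Des_comp \<alpha>)"
  by (simp add: Des_comp_image)

lemma card_Des_comp:
  assumes "is_comp n \<alpha>"
  shows "card (Des_comp \<alpha>) = length \<alpha> - 1"
proof -
  have "strict_mono_on {1..<length \<alpha>} (\<lambda>j. sum_list (take j \<alpha>))"
    using assms sum_list_take_strict_mono by (auto simp: is_comp_def strict_mono_on_def)
  then show ?thesis
    unfolding Des_comp_image by (simp add: card_image strict_mono_on_imp_inj_on)
qed

lemma hd_in_Des_comp: "2 \<le> length \<alpha> \<Longrightarrow> hd \<alpha> \<in> Des_comp \<alpha>"
  unfolding Des_comp_def by (cases \<alpha>) force+

definition xD_exponent :: "nat \<Rightarrow> nat set \<Rightarrow> (nat \<Rightarrow> int) \<Rightarrow> (nat \<Rightarrow>\<^sub>0 nat)" where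
  "xD_exponent n D i = (\<Sum>j\<in>D. \<Sum>m=1..j. Poly_Mapping.single m 1) + (\<Sum>m=1..n. Poly_Mapping.single m (nat (i m)))"

lemma xD_eq_monomial: "(xD n D i :: 'a::field mpoly) = monomial (xD_exponent n D i)"
  unfolding xD_def xD_exponent_def X_power by (simp add: X_def prod_monomial mult_single)

lemma lookup_xD_exponent:
  assumes "finite D" "D \<subseteq> {..<n}"
  shows "lookup (xD_exponent n D i) m = (if m \<in> {1..n} then card {j\<in>D. m \<le> j} + nat (i m) else 0)"
proof -
  have "lookup (\<Sum>j\<in>D. \<Sum>m=1..j. Poly_Mapping.single m (1::nat)) m = (\<Sum>j\<in>D. if 1 \<le> m \<and> m \<le> j then 1 else 0)"
    unfolding lookup_sum lookup_single by (intro sum.cong refl) (auto simp: when_def)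
  also have "\<dots> = card {j\<in>D. 1 \<le> m \<and> m \<le> j}"
    using assms(1) by (simp add: sum.inter_filter[symmetric])
  also have "{j\<in>D. 1 \<le> m \<and> m \<le> j} = (if m \<in> {1..n} then {j\<in>D. m \<le> j} else {})"
    using assms(2) by auto
  finally show ?thesis
    unfolding xD_exponent_def lookup_add by (simp add: lookup_sum lookup_single when_def)
qed

lemma lookup_xD_exponent_decreasing:
  assumes "finite D" "D \<subseteq> {..<n}" "1 \<le> j" "j < n" "i (Suc j) \<le> i j"
  shows "lookup (xD_exponent n D i) (Suc j) \<le> lookup (xD_exponent n D i) j"
    and "j \<in> D \<or> i (Suc j) < i j \<Longrightarrow> 0 \<le> i (Suc j) \<Longrightarrow>
      lookup (xD_exponent n D i) (Suc j) < lookup (xD_exponent n D i) j"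
proof -
  have split: "{d\<in>D. j \<le> d} = (if j \<in> D then insert j else id) {d\<in>D. Suc j \<le> d}"
    by (auto simp: le_eq_less_or_eq Suc_le_eq)
  have "card {d\<in>D. Suc j \<le> d} \<le> card {d\<in>D. j \<le> d}"
    using assms(1) by (intro card_mono) auto
  then show "lookup (xD_exponent n D i) (Suc j) \<le> lookup (xD_exponent n D i) j"
    using assms by (simp add: lookup_xD_exponent nat_mono)
  show "lookup (xD_exponent n D i) (Suc j) < lookup (xD_exponent n D i) j"
    if "j \<in> D \<or> i (Suc j) < i j" "0 \<le> i (Suc j)"
    using that assms \<open>card {d\<in>D. Suc j \<le> d} \<le> card {d\<in>D. j \<le> d}\<close>
    by (auto simp: lookup_xD_exponent split nat_mono nat_less_eq_zless)
qed

section \<open>The correspondence between \<open>A\<^sub>n\<^sub>,\<^sub>k\<close> and \<open>GS\<^sub>n\<^sub>,\<^sub>k\<close>\<close>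

lemma in_A_decreasing:
  assumes "in_A n k \<alpha> i" "1 \<le> j" "j < n"
  shows "i (Suc j) \<le> i j"
proof (cases "j < n - k")
  case True
  then show ?thesis
    using assms unfolding in_A_def by blast
next
  case False
  then have "i (Suc j) = 0" "0 \<le> i j"
    using assms unfolding in_A_def by simp_all
  then show ?thesis
    by simp
qed

lemma Des_seq_subset_if_in_A:
  assumes "in_A n k \<alpha> i"
  shows "Des_seq n i \<subseteq> {1..n - k}"
proof
  fix j
  assume j: "j \<in> Des_seq n i"
  show "j \<in> {1..n - k}"
  proof (rule ccontr)
    assume "j \<notin> {1..n - k}"
    then have "i j = 0" "i (Suc j) = 0"
      using j assms by (auto simp: Des_seq_def in_A_def)
    with j show False
      by (simp add: Des_seq_def)
  qed
qed

lemma card_Des_seq_tail_le: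
  assumes dec: "\<And>j. 1 \<le> j \<Longrightarrow> j < n \<Longrightarrow> i (Suc j) \<le> i j"
    and nonneg: "\<And>j. 1 \<le> j \<Longrightarrow> j \<le> n \<Longrightarrow> 0 \<le> i j"
    and m: "1 \<le> m" "m \<le> n"
  shows "int (card {r\<in>Des_seq n i. m \<le> r}) \<le> i m"
  using m(2,1)
proof (induction m rule: inc_induct)
  case base
  have none: "{r\<in>Des_seq n i. n \<le> r} = {}"
    by (auto simp: Des_seq_def)
  show ?case
    unfolding none using nonneg[of n] base by simp
next
  case (step m)
  have split: "{r\<in>Des_seq n i. m \<le> r} = (if m \<in> Des_seq n i then insert m else id) {r\<in>Des_seq n i. Suc m \<le> r}"
    by (auto simp: le_eq_less_or_eq Suc_le_eq)
  have "finite {r\<in>Des_seq n i. Suc m \<le> r}"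
    by (rule finite_subset[of _ "{..<n}"]) (auto simp: Des_seq_def)
  then show ?case
    using step dec[of m] unfolding split by (auto simp: Des_seq_def)
qed

lemma shift_count_Suc:
  "shift_count n k w j = (if j \<in> Des_perm n w \<inter> {1..n - k} then 1 else 0) + shift_count n k w (Suc j)"
proof -
  let ?S = "Des_perm n w \<inter> {1..n - k}"
  have "{r\<in>?S. j \<le> r} = (if j \<in> ?S then insert j else id) {r\<in>?S. Suc j \<le> r}"
    by (auto simp: le_eq_less_or_eq Suc_le_eq)
  then show ?thesis
    by (simp add: shift_count_def)
qed

lemma shift_count_eq_0: "n - k < j \<Longrightarrow> shift_count n k w j = 0"
  by (auto simp: shift_count_def card_eq_0_iff)

lemma shift_count_1: "shift_count n k w 1 = int (card (Des_perm n w \<inter> {1..n - k}))"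
  unfolding shift_count_def by (rule arg_cong[where f = "\<lambda>A. int (card A)"]) auto

lemma Des_perm_subset: "Des_perm n w \<subseteq> {..<n}"
  by (auto simp: Des_perm_def)

lemma Des_comp_subset: "is_comp n \<alpha> \<Longrightarrow> Des_comp \<alpha> \<subseteq> {..<n}"
  using Des_comp_bounds(2) by blast

lemma Des_comp_eq_Des_perm_diff:
  assumes A: "in_A n k \<alpha> i"
    and "Des_comp \<alpha> \<subseteq> Des_perm n w" "Des_perm n w \<subseteq> Des_comp \<alpha> \<union> Des_seq n i"
  shows "Des_comp \<alpha> = Des_perm n w - {1..n - k}"
proof -
  have "d > n - k" if "d \<in> Des_comp \<alpha>" for d
    using A Des_comp_bounds(1)[OF _ that] by (fastforce simp: in_A_def)
  then show ?thesis
    using assms Des_seq_subset_if_in_A[OF A] by fastforce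
qed

lemma lead_term_pibar_w_x_alpha:
  assumes A: "in_A n k \<alpha> i" and w: "w permutes {1..n}"
    and Des_w: "Des_perm n w \<subseteq> Des_comp \<alpha> \<union> Des_seq n i"
  shows "lead_term (pibar_w n w (x_alpha n \<alpha> i :: 'a::field mpoly)) = act w (x_alpha n \<alpha> i)"
proof -
  let ?a = "xD_exponent n (Des_comp \<alpha>) i"
  have D: "finite (Des_comp \<alpha>)" "Des_comp \<alpha> \<subseteq> {..<n}"
    using A by (simp_all add: finite_Des_comp in_A_def Des_comp_subset)
  have "supported_on n (lookup ?a)"
    by (simp add: supported_on_def lookup_xD_exponent[OF D])
  moreover have "lookup ?a (Suc j) \<le> lookup ?a j" if "1 \<le> j" "j < n" for j
    using lookup_xD_exponent_decreasing(1)[OF D that in_A_decreasing[OF A that]] .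
  moreover have "Des_perm n w \<subseteq> Des_perm n (lookup ?a)"
  proof
    fix r
    assume "r \<in> Des_perm n w"
    then have r: "1 \<le> r" "r < n" "r \<in> Des_comp \<alpha> \<or> i (Suc r) < i r"
      using Des_w by (auto simp: Des_perm_def Des_seq_def)
    then have "0 \<le> i (Suc r)"
      using A by (simp add: in_A_def)
    with r show "r \<in> Des_perm n (lookup ?a)"
      using lookup_xD_exponent_decreasing(2)[OF D r(1,2) in_A_decreasing[OF A r(1,2)]] by (simp add: Des_perm_def)
  qed
  ultimately show ?thesis
    unfolding x_alpha_def xD_eq_monomial by (rule lead_term_pibar_w_monomial[OF _ _ w])
qed

lemma shift_count_le:
  assumes A: "in_A n k \<alpha> i" and sub: "Des_perm n w \<inter> {1..n - k} \<subseteq> Des_seq n i"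
    and m: "1 \<le> m" "m \<le> n"
  shows "shift_count n k w m \<le> i m"
proof -
  have "card {r\<in>Des_perm n w \<inter> {1..n - k}. m \<le> r} \<le> card {r\<in>Des_seq n i. m \<le> r}"
    using sub by (intro card_mono) (auto intro: finite_subset[of _ "{..<n}"] simp: Des_seq_def)
  moreover have "int (card {r\<in>Des_seq n i. m \<le> r}) \<le> i m"
    using m by (intro card_Des_seq_tail_le in_A_decreasing[OF A]) (use A in \<open>auto simp: in_A_def\<close>)
  ultimately show ?thesis
    by (simp add: shift_count_def)
qed

lemma xD_exponent_shift:
  assumes A: "in_A n k \<alpha> i"
    and Des_eq: "Des_comp \<alpha> = Des_perm n w - {1..n - k}"
    and sub: "Des_perm n w \<inter> {1..n - k} \<subseteq> Des_seq n i"
    and shift: "\<forall>j\<in>{1..n}. i' j = i j - shift_count n k w j"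
  shows "xD_exponent n (Des_comp \<alpha>) i = xD_exponent n (Des_perm n w) i'"
proof (rule poly_mapping_eqI)
  fix m
  let ?S = "{r\<in>Des_perm n w \<inter> {1..n - k}. m \<le> r}"
  have fin: "finite (Des_perm n w)"
    by (rule finite_subset[OF Des_perm_subset]) simp
  have Da: "finite (Des_comp \<alpha>)" "Des_comp \<alpha> \<subseteq> {..<n}"
    using A by (simp_all add: finite_Des_comp in_A_def Des_comp_subset)
  have "{j\<in>Des_perm n w. m \<le> j} = {j\<in>Des_comp \<alpha>. m \<le> j} \<union> ?S"
    "{j\<in>Des_comp \<alpha>. m \<le> j} \<inter> ?S = {}"
    using Des_eq by auto
  then have card: "card {j\<in>Des_perm n w. m \<le> j} = card {j\<in>Des_comp \<alpha>. m \<le> j} + card ?S"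
    using fin Da(1) by (simp add: card_Un_disjoint)
  have "m \<in> {1..n} \<Longrightarrow> nat (i m) = nat (i' m) + card ?S"
    using shift shift_count_le[OF A sub, of m] by (simp add: shift_count_def)
  then show "lookup (xD_exponent n (Des_comp \<alpha>) i) m = lookup (xD_exponent n (Des_perm n w) i') m"
    using card by (simp add: lookup_xD_exponent[OF Da] lookup_xD_exponent[OF fin Des_perm_subset])
qed

lemma act_x_alpha_eq_gs:
  assumes "in_A n k \<alpha> i" "Des_comp \<alpha> \<subseteq> Des_perm n w" "Des_perm n w \<subseteq> Des_comp \<alpha> \<union> Des_seq n i"
    and "\<forall>j\<in>{1..n}. i' j = i j - shift_count n k w j"
  shows "act w (x_alpha n \<alpha> i :: 'a::field mpoly) = gs n w i'"
proof -
  have Des_eq: "Des_comp \<alpha> = Des_perm n w - {1..n - k}"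
    using assms(1-3) by (rule Des_comp_eq_Des_perm_diff)
  then have "Des_perm n w \<inter> {1..n - k} \<subseteq> Des_seq n i"
    using assms(3) by blast
  note shift = xD_exponent_shift[OF assms(1) Des_eq this assms(4)]
  show ?thesis
    unfolding x_alpha_def gs_def xD_eq_monomial shift ..
qed

lemma card_Des_perm_split:
  assumes "Des_comp \<alpha> = Des_perm n w - {1..n - k}"
  shows "des_perm n w = card (Des_perm n w \<inter> {1..n - k}) + card (Des_comp \<alpha>)"
  unfolding des_perm_def assms
  by (rule card_Int_Diff) (rule finite_subset[OF Des_perm_subset], simp)

lemma length_comp:
  "1 \<le> n \<Longrightarrow> is_comp n \<alpha> \<Longrightarrow> length \<alpha> = card (Des_comp \<alpha>) + 1"
  by (cases \<alpha>) (auto simp: card_Des_comp is_comp_def)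

lemma GS_index_shift:
  assumes n: "1 \<le> n" and A: "in_A n k \<alpha> i" and w: "w permutes {1..n}"
    and Des_w: "Des_comp \<alpha> \<subseteq> Des_perm n w" "Des_perm n w \<subseteq> Des_comp \<alpha> \<union> Des_seq n i"
    and shift: "\<forall>j\<in>{1..n}. i' j = i j - shift_count n k w j"
  shows "GS_index n k w i'"
proof -
  have Des_eq: "Des_comp \<alpha> = Des_perm n w - {1..n - k}"
    using A Des_w by (rule Des_comp_eq_Des_perm_diff)
  then have sub: "Des_perm n w \<inter> {1..n - k} \<subseteq> Des_seq n i"
    using Des_w(2) by blast
  have c: "is_comp n \<alpha>" and i1: "i 1 \<le> int k - int (length \<alpha>)"
    using A by (simp_all add: in_A_def)
  have "i' 1 = i 1 - int (card (Des_perm n w \<inter> {1..n - k}))"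
    using shift n shift_count_1[of n k w] by simp
  then have first: "i' 1 < int k - int (des_perm n w)"
    using i1 length_comp[OF n c] card_Des_perm_split[OF Des_eq] by simp
  have dec: "i' (Suc j) \<le> i' j" if j: "1 \<le> j" "j < n - k" for j
  proof (cases "j \<in> Des_perm n w \<inter> {1..n - k}")
    case True
    then have "i (Suc j) < i j"
      using sub by (auto simp: Des_seq_def)
    then show ?thesis
      using True j shift shift_count_Suc[of n k w j] by simp
  next
    case False
    then show ?thesis
      using j shift shift_count_Suc[of n k w j] in_A_decreasing[OF A, of j] by simp
  qed
  have "0 \<le> i' j" if "1 \<le> j" "j \<le> n" for j
    using that shift shift_count_le[OF A sub] by simp
  moreover have "i' j = 0" if "n - k < j" "j \<le> n" for j
    using that shift A by (simp add: shift_count_eq_0 in_A_def)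
  ultimately show ?thesis
    using w first dec by (simp add: GS_index_def)
qed

lemma in_A_if_GS_index:
  assumes k: "1 \<le> k" "k \<le> n" and g: "GS_index n k w i'" and c: "is_comp n \<alpha>"
    and Des_eq: "Des_comp \<alpha> = Des_perm n w - {1..n - k}"
    and shift: "\<forall>j\<in>{1..n}. i' j = i j - shift_count n k w j"
  shows "in_A n k \<alpha> i"
proof -
  have first: "i' 1 < int k - int (des_perm n w)"
    and dec: "\<And>j. 1 \<le> j \<Longrightarrow> j < n - k \<Longrightarrow> i' (Suc j) \<le> i' j"
    and nonneg: "\<And>j. 1 \<le> j \<Longrightarrow> j \<le> n \<Longrightarrow> 0 \<le> i' j"
    and zero: "\<And>j. n - k < j \<Longrightarrow> j \<le> n \<Longrightarrow> i' j = 0"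
    using g by (auto simp: GS_index_def)
  have i: "i j = i' j + shift_count n k w j" if "1 \<le> j" "j \<le> n" for j
    using shift that by simp
  have "n - k < hd \<alpha>"
  proof (cases "length \<alpha> = 1")
    case True
    then show ?thesis
      using c k by (cases \<alpha>) (auto simp: is_comp_def)
  next
    case False
    then have "2 \<le> length \<alpha>"
      using c k by (cases \<alpha>) (auto simp: is_comp_def Suc_le_eq)
    then have "hd \<alpha> \<in> Des_perm n w - {1..n - k}"
      using hd_in_Des_comp Des_eq by blast
    then show ?thesis
      by (auto simp: Des_perm_def)
  qed
  moreover have "i 1 \<le> int k - int (length \<alpha>)"
  proof -
    have "i 1 = i' 1 + int (card (Des_perm n w \<inter> {1..n - k}))"
      using i[of 1] k shift_count_1[of n k w] by simp
    moreover have "int (length \<alpha>) = int (card (Des_comp \<alpha>)) + 1"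
      using length_comp[OF _ c] k by simp
    ultimately show ?thesis
      using first card_Des_perm_split[OF Des_eq] by simp
  qed
  moreover have "i (Suc j) \<le> i j" if "1 \<le> j" "j < n - k" for j
    using that i[of j] i[of "Suc j"] dec[OF that] shift_count_Suc[of n k w j] by simp
  moreover have "0 \<le> i j" if "1 \<le> j" "j \<le> n" for j
    using that i[of j] nonneg[of j] by (simp add: shift_count_def)
  moreover have "i j = 0" if "n - k < j" "j \<le> n" for j
    using that i[of j] zero[of j] shift_count_eq_0[of n k j w] by simp
  ultimately show ?thesis
    using c by (simp add: in_A_def)
qed

lemma Des_perm_subset_if_GS_index:
  assumes g: "GS_index n k w i'"
    and Des_eq: "Des_comp \<alpha> = Des_perm n w - {1..n - k}"
    and shift: "\<forall>j\<in>{1..n}. i' j = i j - shift_count n k w j"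
  shows "Des_perm n w \<subseteq> Des_comp \<alpha> \<union> Des_seq n i"
proof
  fix r
  assume r: "r \<in> Des_perm n w"
  show "r \<in> Des_comp \<alpha> \<union> Des_seq n i"
  proof (cases "r \<in> {1..n - k}")
    case True
    have "i' (Suc r) \<le> i' r"
    proof (cases "r < n - k")
      case True
      then show ?thesis
        using g r by (simp add: GS_index_def Des_perm_def)
    next
      case False
      then have "i' (Suc r) = 0" "0 \<le> i' r"
        using g r \<open>r \<in> {1..n - k}\<close> by (auto simp: GS_index_def Des_perm_def)
      then show ?thesis
        by simp
    qed
    then have "i (Suc r) < i r"
      using r True shift shift_count_Suc[of n k w r] by (auto simp: Des_perm_def)
    with r show ?thesis
      by (simp add: Des_perm_def Des_seq_def)
  qed (use r Des_eq in blast)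
qed

lemma monomial_inj: "(monomial e :: 'a::field mpoly) = monomial e' \<Longrightarrow> e = e'"
  by (drule arg_cong[where f = "\<lambda>p. lookup p e"]) (simp add: lookup_single when_def split: if_splits)

lemma gs_eq_imp_eq:
  assumes w: "w permutes {1..n}"
    and "\<forall>j\<in>{1..n}. 0 \<le> i1 j" "\<forall>j\<in>{1..n}. 0 \<le> i2 j"
    and eq: "(gs n w i1 :: 'a::field mpoly) = gs n w i2"
  shows "\<forall>j\<in>{1..n}. i1 j = i2 j"
proof
  fix j :: nat
  assume j: "j \<in> {1..n}"
  have "monomial (permute_exponent w (xD_exponent n (Des_perm n w) i1))
      = (monomial (permute_exponent w (xD_exponent n (Des_perm n w) i2)) :: 'a mpoly)"
    using eq by (simp add: gs_def xD_eq_monomial act_monomial)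
  then have "xD_exponent n (Des_perm n w) i1 = xD_exponent n (Des_perm n w) i2"
    by (rule permute_exponent_inj[OF permutes_bij[OF w] monomial_inj])
  then have "lookup (xD_exponent n (Des_perm n w) i1) j = lookup (xD_exponent n (Des_perm n w) i2) j"
    by simp
  moreover have "finite (Des_perm n w)"
    by (rule finite_subset[OF Des_perm_subset]) simp
  ultimately have "nat (i1 j) = nat (i2 j)"
    using j by (simp add: lookup_xD_exponent[OF _ Des_perm_subset])
  moreover have "0 \<le> i1 j" "0 \<le> i2 j"
    using assms(2,3) j by blast+
  ultimately show "i1 j = i2 j"
    by simp
qed

lemma Des_eq_shift_if_lead_term_eq_gs:
  assumes n: "1 \<le> n" and g: "GS_index n k w i'" and A: "in_A n k \<alpha> i"
    and Des_w: "Des_comp \<alpha> \<subseteq> Des_perm n w" "Des_perm n w \<subseteq> Des_comp \<alpha> \<union> Des_seq n i"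
    and lead: "lead_term (pibar_w n w (x_alpha n \<alpha> i :: 'a::field mpoly)) = gs n w i'"
  shows "Des_comp \<alpha> = Des_perm n w - {1..n - k} \<and> (\<forall>j\<in>{1..n}. i' j = i j - shift_count n k w j)"
proof
  show "Des_comp \<alpha> = Des_perm n w - {1..n - k}"
    using A Des_w by (rule Des_comp_eq_Des_perm_diff)
  define i'' where "i'' j = i j - shift_count n k w j" for j
  have w: "w permutes {1..n}"
    using g by (simp add: GS_index_def)
  have g'': "GS_index n k w i''"
    using n A w Des_w by (rule GS_index_shift) (simp add: i''_def)
  have "(gs n w i' :: 'a mpoly) = gs n w i''"
    using lead lead_term_pibar_w_x_alpha[where 'a = 'a, OF A w Des_w(2)]
      act_x_alpha_eq_gs[where 'a = 'a, OF A Des_w, of i''] by (simp add: i''_def)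
  then have "\<forall>j\<in>{1..n}. i' j = i'' j"
    by (rule gs_eq_imp_eq[OF w, rotated 2]) (use g g'' in \<open>simp_all add: GS_index_def\<close>)
  then show "\<forall>j\<in>{1..n}. i' j = i j - shift_count n k w j"
    by (simp add: i''_def)
qed

lemma lead_term_eq_gs_if_Des_eq_shift:
  assumes k: "1 \<le> k" "k \<le> n" and g: "GS_index n k w i'" and c: "is_comp n \<alpha>"
    and Des_eq: "Des_comp \<alpha> = Des_perm n w - {1..n - k}"
    and shift: "\<forall>j\<in>{1..n}. i' j = i j - shift_count n k w j"
  shows "in_A n k \<alpha> i \<and> Des_comp \<alpha> \<subseteq> Des_perm n w \<and> Des_perm n w \<subseteq> Des_comp \<alpha> \<union> Des_seq n i
    \<and> lead_term (pibar_w n w (x_alpha n \<alpha> i :: 'a::field mpoly)) = gs n w i'"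
proof -
  have A: "in_A n k \<alpha> i"
    using k g c Des_eq shift by (rule in_A_if_GS_index)
  have Des_w: "Des_comp \<alpha> \<subseteq> Des_perm n w" "Des_perm n w \<subseteq> Des_comp \<alpha> \<union> Des_seq n i"
    using Des_eq Des_perm_subset_if_GS_index[OF g Des_eq shift] by auto
  have w: "w permutes {1..n}"
    using g by (simp add: GS_index_def)
  show ?thesis
    using A Des_w lead_term_pibar_w_x_alpha[where 'a = 'a, OF A w Des_w(2)]
      act_x_alpha_eq_gs[where 'a = 'a, OF A Des_w shift] by simp
qed

theorem mainTheorem14:
  fixes n k :: nat
  assumes "1 \<le> k" and "k \<le> n"
  shows
   "(\<forall>(\<alpha>::nat list) (i::nat \<Rightarrow> int) (w::nat \<Rightarrow> nat) (i'::nat \<Rightarrow> int).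
       in_A n k \<alpha> i \<longrightarrow> w permutes {1..n} \<longrightarrow>
       Des_comp \<alpha> \<subseteq> Des_perm n w \<longrightarrow> Des_perm n w \<subseteq> Des_comp \<alpha> \<union> Des_seq n i \<longrightarrow>
       (\<forall>j\<in>{1..n}. i' j = i j - shift_count n k w j) \<longrightarrow>
       lead_term (pibar_w n w (x_alpha n \<alpha> i :: 'a::field mpoly)) = act w (x_alpha n \<alpha> i)
       \<and> act w (x_alpha n \<alpha> i :: 'a mpoly) = gs n w i'
       \<and> GS_index n k w i' \<and> (gs n w i' :: 'a mpoly) \<in> GS n k)
    \<and>
    (\<forall>(w::nat \<Rightarrow> nat) (i'::nat \<Rightarrow> int). GS_index n k w i' \<longrightarrow>
       (\<forall>(\<alpha>::nat list) (i::nat \<Rightarrow> int). is_comp n \<alpha> \<longrightarrow>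
         ((in_A n k \<alpha> i \<and> Des_comp \<alpha> \<subseteq> Des_perm n w \<and>
           Des_perm n w \<subseteq> Des_comp \<alpha> \<union> Des_seq n i \<and>
           lead_term (pibar_w n w (x_alpha n \<alpha> i :: 'a mpoly)) = gs n w i')
          \<longleftrightarrow>
          (Des_comp \<alpha> = Des_perm n w - {1..n-k} \<and>
           (\<forall>j\<in>{1..n}. i' j = i j - shift_count n k w j)))))"
proof (intro conjI allI impI)
  fix \<alpha> i w i'
  assume A: "in_A n k \<alpha> i" and w: "w permutes {1..n}"
    and Des_w: "Des_comp \<alpha> \<subseteq> Des_perm n w" "Des_perm n w \<subseteq> Des_comp \<alpha> \<union> Des_seq n i"
    and shift: "\<forall>j\<in>{1..n}. i' j = i j - shift_count n k w j"
  show "lead_term (pibar_w n w (x_alpha n \<alpha> i :: 'a::field mpoly)) = act w (x_alpha n \<alpha> i)"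
    using A w Des_w(2) by (rule lead_term_pibar_w_x_alpha)
  show "act w (x_alpha n \<alpha> i :: 'a mpoly) = gs n w i'"
    using A Des_w shift by (rule act_x_alpha_eq_gs)
  show "GS_index n k w i'"
    using assms by (intro GS_index_shift[OF _ A w Des_w shift]) simp
  then show "(gs n w i' :: 'a mpoly) \<in> GS n k"
    by (auto simp: GS_def)
next
  fix w i' \<alpha> i
  assume g: "GS_index n k w i'" and c: "is_comp n \<alpha>"
  have n: "1 \<le> n"
    using assms by simp
  show "(in_A n k \<alpha> i \<and> Des_comp \<alpha> \<subseteq> Des_perm n w \<and> Des_perm n w \<subseteq> Des_comp \<alpha> \<union> Des_seq n i \<and>
      lead_term (pibar_w n w (x_alpha n \<alpha> i :: 'a mpoly)) = gs n w i')
    \<longleftrightarrow> (Des_comp \<alpha> = Des_perm n w - {1..n - k} \<and> (\<forall>j\<in>{1..n}. i' j = i j - shift_count n k w j))"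
    using Des_eq_shift_if_lead_term_eq_gs[where 'a = 'a, OF n g, of \<alpha> i]
      lead_term_eq_gs_if_Des_eq_shift[where 'a = 'a, OF assms g c, of i] by blast
qed

end
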